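(* Every graph $G\in\mathcal{C}$, with $n$ vertices, $m$ edges, $k$ components and $c_1$ induced cycles of length congruent to $1$ modulo $3$, satisfies $\mathrm{diss}(G)= n-\frac{1}{3}(m+k+c_1)$. Furthermore, for every vertex $u$ of every graph $G\in\mathcal{C}$, the graph $G$ has a maximum dissociation set not containing $u$.
   Context: A set $D$ of vertices of a graph $G$ is a dissociation set if the induced subgraph $G[D]$ has maximum degree at most $1$; $\mathrm{diss}(G)$ is the maximum cardinality of a dissociation set, and a maximum dissociation set is one of that cardinality. An induced cycle is a cycle subgraph $C$ with $G[V(C)]=C$. Spiked cycles: for positive integers $\ell,k$ with $\ell\geq\max\{3,k\}$ and indices $1\le i_1<\dots<i_k\le \ell$, the spiked cycle $C^*$ with $k$ spikes at $\{i_1,\dots,i_k\}$ arises from the cycle $u_1u_2\dots u_\ell u_1$ by adding, for each $j$, a new vertex $v_{i_j}$ adjacent only to $u_{i_j}$. It is good if either $k=1$ and $\ell\equiv 1\pmod 3$, or $k\ge 2$, $i_{j+1}-i_j\equiv 2\pmod 3$ for all $j\in\{1,\dots,k-1\}$, and $\ell+i_1-i_k\equiv 1\pmod 3$. It is very good if it is good and $\ell\not\equiv 1\pmod 3$. Operations on a graph $G'$: $(O_1)$ add new vertices $u,v,w$ with edges $uv,vw$ and an edge from $w$ to some vertex of $G'$; $(O_2)$ add new vertices $v,u,u'$ with edges $vu,vu'$ and an edge from $v$ to some vertex of $G'$; $(O_3)$ add a disjoint new cycle $C_\ell$ with $\ell\ge 3$, $\ell\not\equiv 0\pmod 3$, and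 an edge from some vertex of the cycle to some vertex of $G'$; $(O_4)$ add a disjoint new very good spiked cycle $C^*$ and an edge between some vertex of $G'$ and some vertex of $C^*$. Let $\mathcal{C}_0$ consist of $P_3$, all cycles $C_\ell$ with $\ell\ge 3$ and $\ell\not\equiv 0\pmod 3$, and all very good spiked cycles. $\mathcal{C}$ is the set of all graphs obtained from graphs in $\mathcal{C}_0$ by finitely many (possibly zero) applications of the operations $(O_1)$, $(O_2)$, $(O_3)$, $(O_4)$. *)

theory Defs
  imports Complex_Main
begin

text \<open>Finite simple graphs are given as a pair (V, E) with E a set of 2-element subsets of V.\<close>

definition adj :: "'a set set \<Rightarrow> 'a \<Rightarrow> 'a \<Rightarrow> bool" where
  "adj E x y \<longleftrightarrow> {x, y} \<in> E"

definition dissociation_set :: "'a set \<Rightarrow> 'a set set \<Rightarrow> 'a set \<Rightarrow> bool" where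
  "dissociation_set V E D \<longleftrightarrow> D \<subseteq> V \<and> (\<forall>x\<in>D. card {y\<in>D. adj E x y} \<le> 1)"

definition diss :: "'a set \<Rightarrow> 'a set set \<Rightarrow> nat" where
  "diss V E = Max {card D | D. dissociation_set V E D}"

definition max_dissociation_set :: "'a set \<Rightarrow> 'a set set \<Rightarrow> 'a set \<Rightarrow> bool" where
  "max_dissociation_set V E D \<longleftrightarrow> dissociation_set V E D \<and> card D = diss V E"

definition cycle_edges :: "'a list \<Rightarrow> 'a set set" where
  "cycle_edges vs = {{vs ! i, vs ! (Suc i mod length vs)} | i. i < length vs}"

definition is_cycle_graph :: "'a list \<Rightarrow> 'a set \<Rightarrow> 'a set set \<Rightarrow> bool" where
  "is_cycle_graph vs V E \<longleftrightarrow> length vs \<ge> 3 \<and> distinct vs \<and> V = set vs \<and> E = cycle_edges vs"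

text \<open>Spiked cycle: cycle us = u_0 ... u_(l-1) (0-indexed), spike positions I, spike vertex sp i
  adjacent only to us!i.\<close>
definition is_spiked_cycle :: "'a list \<Rightarrow> nat set \<Rightarrow> (nat \<Rightarrow> 'a) \<Rightarrow> 'a set \<Rightarrow> 'a set set \<Rightarrow> bool" where
  "is_spiked_cycle us I sp V E \<longleftrightarrow>
     length us \<ge> 3 \<and> distinct us \<and> I \<subseteq> {..<length us} \<and> I \<noteq> {} \<and>
     inj_on sp I \<and> sp ` I \<inter> set us = {} \<and>
     V = set us \<union> sp ` I \<and>
     E = cycle_edges us \<union> {{us ! i, sp i} | i. i \<in> I}"

text \<open>Goodness, in terms of the sorted spike positions i_1 < ... < i_k (shifting all indices by one
  does not affect differences).\<close>
definition good_spikes :: "nat \<Rightarrow> nat set \<Rightarrow> bool" where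
  "good_spikes l I \<longleftrightarrow>
     (let is = sorted_list_of_set I; k = length is in
       (k = 1 \<and> l mod 3 = 1) \<or>
       (k \<ge> 2 \<and> (\<forall>j. j + 1 < k \<longrightarrow> (is ! (j + 1) - is ! j) mod 3 = 2)
              \<and> (l + is ! 0 - is ! (k - 1)) mod 3 = 1))"

definition very_good_spikes :: "nat \<Rightarrow> nat set \<Rightarrow> bool" where
  "very_good_spikes l I \<longleftrightarrow> good_spikes l I \<and> l mod 3 \<noteq> 1"

definition very_good_spiked_cycle :: "'a set \<Rightarrow> 'a set set \<Rightarrow> bool" where
  "very_good_spiked_cycle V E \<longleftrightarrow>
     (\<exists>us I sp. is_spiked_cycle us I sp V E \<and> very_good_spikes (length us) I)"

definition good_cycle :: "'a set \<Rightarrow> 'a set set \<Rightarrow> bool" where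
  "good_cycle V E \<longleftrightarrow> (\<exists>vs. is_cycle_graph vs V E \<and> length vs mod 3 \<noteq> 0)"

inductive inC :: "'a set \<Rightarrow> 'a set set \<Rightarrow> bool" where
  base_P3: "distinct [a, b, c] \<Longrightarrow> inC {a, b, c} {{a, b}, {b, c}}"
| base_cycle: "good_cycle V E \<Longrightarrow> inC V E"
| base_spiked: "very_good_spiked_cycle V E \<Longrightarrow> inC V E"
| op1: "inC V E \<Longrightarrow> distinct [u, v, w] \<Longrightarrow> u \<notin> V \<Longrightarrow> v \<notin> V \<Longrightarrow> w \<notin> V \<Longrightarrow> x \<in> V \<Longrightarrow>
        inC (V \<union> {u, v, w}) (E \<union> {{u, v}, {v, w}, {w, x}})"
| op2: "inC V E \<Longrightarrow> distinct [v, u, u'] \<Longrightarrow> v \<notin> V \<Longrightarrow> u \<notin> V \<Longrightarrow> u' \<notin> V \<Longrightarrow> x \<in> V \<Longrightarrow>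
        inC (V \<union> {v, u, u'}) (E \<union> {{v, u}, {v, u'}, {v, x}})"
| op3: "inC V E \<Longrightarrow> good_cycle H EH \<Longrightarrow> H \<inter> V = {} \<Longrightarrow> y \<in> H \<Longrightarrow> x \<in> V \<Longrightarrow>
        inC (V \<union> H) (E \<union> EH \<union> {{x, y}})"
| op4: "inC V E \<Longrightarrow> very_good_spiked_cycle H EH \<Longrightarrow> H \<inter> V = {} \<Longrightarrow> y \<in> H \<Longrightarrow> x \<in> V \<Longrightarrow>
        inC (V \<union> H) (E \<union> EH \<union> {{x, y}})"

definition reach :: "'a set \<Rightarrow> 'a set set \<Rightarrow> 'a \<Rightarrow> 'a \<Rightarrow> bool" where
  "reach V E = (\<lambda>x y. x \<in> V \<and> y \<in> V \<and> adj E x y)\<^sup>*\<^sup>*"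

definition components :: "'a set \<Rightarrow> 'a set set \<Rightarrow> 'a set set" where
  "components V E = {{y \<in> V. reach V E x y} | x. x \<in> V}"

text \<open>Induced cycles, identified with their vertex sets S (an induced cycle is determined by S).\<close>
definition induced_cycle_sets :: "'a set \<Rightarrow> 'a set set \<Rightarrow> 'a set set" where
  "induced_cycle_sets V E = {S. S \<subseteq> V \<and> (\<exists>vs. is_cycle_graph vs S {e \<in> E. e \<subseteq> S})}"

end

theory Submission
  imports Defs
begin

text \<open>Every graph of \<open>\<C>\<close> is connected, and the claim is proved for the stronger, inductive
  statement \<open>3 diss(G) + m + 1 + c\<^sub>1 = 3 n\<close> together with the avoidance property. Joining two
  graphs by a bridge preserves it: maximum dissociation sets avoiding the two bridge ends can be
  combined, so \<open>diss\<close> is additive, and no induced cycle uses the bridge. It remains to check the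
  base graphs. For a spiked cycle, deleting any one vertex leaves a caterpillar, in which two of
  every three consecutive vertices form a dissociation set; this gives the lower bound. For the
  upper bound, every window of three consecutive rim vertices misses a vertex of a dissociation
  set, and for very good spiked cycles the congruences force an extra miss between consecutive
  spikes.\<close>

section \<open>Dissociation sets\<close>

lemma adj_commute: "adj E x y = adj E y x"
  by (simp add: adj_def insert_commute)

definition dissociated :: "'a set set \<Rightarrow> 'a set \<Rightarrow> bool" where
  "dissociated E D \<longleftrightarrow> (\<forall>x\<in>D. card {y\<in>D. adj E x y} \<le> 1)"

lemma dissociation_set_iff: "dissociation_set V E D \<longleftrightarrow> D \<subseteq> V \<and> dissociated E D"
  by (simp add: dissociation_set_def dissociated_def)

lemma dissociation_set_finite: "finite V \<Longrightarrow> dissociation_set V E D \<Longrightarrow> finite D"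
  by (auto simp: dissociation_set_def intro: finite_subset)

lemma finite_dissociation_set_cards: "finite V \<Longrightarrow> finite {card D | D. dissociation_set V E D}"
proof -
  assume "finite V"
  moreover have "{card D | D. dissociation_set V E D} \<subseteq> card ` Pow V"
    by (auto simp: dissociation_set_def)
  ultimately show ?thesis by (meson finite_Pow_iff finite_imageI finite_subset)
qed

lemma card_le_diss: "finite V \<Longrightarrow> dissociation_set V E D \<Longrightarrow> card D \<le> diss V E"
  unfolding diss_def by (auto intro: Max_ge finite_dissociation_set_cards)

lemma ex_max_dissociation_set: "finite V \<Longrightarrow> \<exists>D. max_dissociation_set V E D"
proof -
  assume "finite V"
  moreover have "dissociation_set V E {}" by (simp add: dissociation_set_def)
  ultimately have "diss V E \<in> {card D | D. dissociation_set V E D}"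
    unfolding diss_def by (intro Max_in finite_dissociation_set_cards) auto
  thus ?thesis by (auto simp: max_dissociation_set_def)
qed

lemma max_dissociation_setI:
  "finite V \<Longrightarrow> dissociation_set V E D \<Longrightarrow> diss V E \<le> card D \<Longrightarrow> max_dissociation_set V E D"
  using card_le_diss by (fastforce simp: max_dissociation_set_def)

lemma dissociation_set_restrict:
  assumes "dissociation_set V E D" "finite D" "E' \<subseteq> E"
  shows "dissociation_set A E' (D \<inter> A)"
  unfolding dissociation_set_def
proof (intro conjI ballI)
  fix z assume z: "z \<in> D \<inter> A"
  have "card {w \<in> D \<inter> A. adj E' z w} \<le> card {w \<in> D. adj E z w}"
    using assms(2,3) by (intro card_mono) (auto simp: adj_def)
  also have "\<dots> \<le> 1" using assms(1) z by (auto simp: dissociation_set_def)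
  finally show "card {w \<in> D \<inter> A. adj E' z w} \<le> 1" .
qed simp

lemma dissociated_Un:
  assumes "dissociated E A" "dissociated E B" "\<forall>a\<in>A. \<forall>b\<in>B. \<not> adj E a b"
  shows "dissociated E (A \<union> B)"
  unfolding dissociated_def
proof
  fix x assume x: "x \<in> A \<union> B"
  show "card {y \<in> A \<union> B. adj E x y} \<le> 1"
  proof (cases "x \<in> A")
    case True
    hence "{y \<in> A \<union> B. adj E x y} = {y \<in> A. adj E x y}" using assms(3) by auto
    thus ?thesis using assms(1) True by (simp add: dissociated_def)
  next
    case False
    hence xB: "x \<in> B" using x by blast
    hence "{y \<in> A \<union> B. adj E x y} = {y \<in> B. adj E x y}"
      using assms(3) adj_commute by fastforce
    thus ?thesis using assms(2) xB by (simp add: dissociated_def)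
  qed
qed

lemma dissociated_of_card_le_2:
  assumes "finite D" "card D \<le> 2" "\<forall>a\<in>D. \<not> adj E a a"
  shows "dissociated E D"
  unfolding dissociated_def
proof
  fix z assume z: "z \<in> D"
  have "card {y \<in> D. adj E z y} \<le> card (D - {z})"
    using assms(1,3) z by (intro card_mono) auto
  also have "\<dots> \<le> 1" using assms(1,2) z by simp
  finally show "card {y \<in> D. adj E z y} \<le> 1" .
qed

lemma dissociated_singleton: "\<not> adj E a a \<Longrightarrow> dissociated E {a}"
  by (rule dissociated_of_card_le_2) auto

lemma dissociated_pair: "\<not> adj E a a \<Longrightarrow> \<not> adj E b b \<Longrightarrow> dissociated E {a, b}"
  by (rule dissociated_of_card_le_2) (auto simp: card_insert_if)

lemma dissociated_triple:
  assumes "\<not> adj E a a" "\<not> adj E b b" "\<not> adj E c c" "\<not> adj E a c" "\<not> adj E b c"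
  shows "dissociated E {a, b, c}"
  unfolding dissociated_def
proof
  fix z assume z: "z \<in> {a, b, c}"
  show "card {y \<in> {a, b, c}. adj E z y} \<le> 1"
  proof (cases "z = c")
    case True
    have "\<not> adj E c a" "\<not> adj E c b" using assms(4,5) adj_commute by metis+
    hence "{y \<in> {a, b, c}. adj E z y} = {}" using True assms(3) by auto
    thus ?thesis by (simp only: card.empty)
  next
    case False
    hence "z \<in> {a, b}" using z by blast
    have "card {y \<in> {a, b, c}. adj E z y} \<le> card ({a, b} - {z})"
      using assms \<open>z \<in> {a, b}\<close> by (intro card_mono) auto
    also have "\<dots> \<le> 1" using \<open>z \<in> {a, b}\<close> by (cases "a = b") auto
    finally show ?thesis .
  qed
qed

lemma dissociation_set_no_two_nbrs:
  assumes "dissociation_set V E D" "finite D" "z \<in> D"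
    and "a \<noteq> b" "a \<in> D" "b \<in> D" "adj E z a" "adj E z b"
  shows False
proof -
  have "card {a, b} \<le> card {y \<in> D. adj E z y}" using assms(2,5-8) by (intro card_mono) auto
  moreover have "card {y \<in> D. adj E z y} \<le> 1" using assms(1,3) by (auto simp: dissociation_set_def)
  ultimately show False using assms(4) by simp
qed

section \<open>Joining two graphs by a bridge\<close>

definition simple_graph :: "'a set \<Rightarrow> 'a set set \<Rightarrow> bool" where
  "simple_graph V E \<longleftrightarrow> (\<forall>e\<in>E. \<exists>a b. a \<noteq> b \<and> a \<in> V \<and> b \<in> V \<and> e = {a, b})"

lemma simple_graph_adjD: "simple_graph V E \<Longrightarrow> adj E a b \<Longrightarrow> a \<in> V \<and> b \<in> V \<and> a \<noteq> b"
  unfolding simple_graph_def adj_def by (metis doubleton_eq_iff insert_absorb2)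

lemma simple_graph_edge_subset: "simple_graph V E \<Longrightarrow> e \<in> E \<Longrightarrow> e \<subseteq> V"
  unfolding simple_graph_def by fastforce

lemma simple_graph_finite_edges: "simple_graph V E \<Longrightarrow> finite V \<Longrightarrow> finite E"
  by (metis Pow_iff finite_Pow_iff rev_finite_subset subsetI simple_graph_edge_subset)

definition avoidable :: "'a set \<Rightarrow> 'a set set \<Rightarrow> bool" where
  "avoidable V E \<longleftrightarrow> (\<forall>u\<in>V. \<exists>D. max_dissociation_set V E D \<and> u \<notin> D)"

locale bridge =
  fixes A :: "'a set" and EA :: "'a set set" and B :: "'a set" and EB :: "'a set set" and x y :: 'a
  assumes finite_A: "finite A" and finite_B: "finite B" and disjoint: "A \<inter> B = {}"
    and x_in_A: "x \<in> A" and y_in_B: "y \<in> B"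
    and simple_A: "simple_graph A EA" and simple_B: "simple_graph B EB"
begin

abbreviation EAB :: "'a set set" where
  "EAB \<equiv> EA \<union> EB \<union> {{x, y}}"

lemma bridge_swap: "bridge B EB A EA y x"
  using finite_A finite_B disjoint x_in_A y_in_B simple_A simple_B by unfold_locales auto

lemma EAB_swap: "EB \<union> EA \<union> {{y, x}} = EAB"
  by (auto simp: insert_commute)

lemma adj_EAB: "adj EAB a b \<longleftrightarrow> adj EA a b \<or> adj EB a b \<or> {a, b} = {x, y}"
  by (auto simp: adj_def)

lemma nbrs_in_A:
  assumes "DA \<subseteq> A" "DB \<subseteq> B" "x \<notin> DA \<or> y \<notin> DB" "z \<in> DA"
  shows "{w \<in> DA \<union> DB. adj EAB z w} = {w \<in> DA. adj EA z w}"
proof -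
  have "w \<in> DA \<and> adj EA z w" if w: "w \<in> DA \<union> DB" and zw: "adj EAB z w" for w
  proof -
    have "\<not> adj EB z w" using simple_graph_adjD[OF simple_B] assms(1,4) disjoint by blast
    moreover have "{z, w} \<noteq> {x, y}"
      using assms w x_in_A y_in_B disjoint by (auto simp: doubleton_eq_iff)
    ultimately have "adj EA z w" using zw adj_EAB by blast
    thus ?thesis using simple_graph_adjD[OF simple_A] w assms(2) disjoint by blast
  qed
  thus ?thesis using adj_EAB by blast
qed

lemma dissociation_set_Un:
  assumes DA: "dissociation_set A EA DA" and DB: "dissociation_set B EB DB"
    and xy: "x \<notin> DA \<or> y \<notin> DB"
  shows "dissociation_set (A \<union> B) EAB (DA \<union> DB)"
proof -
  interpret swap: bridge B EB A EA y x by (rule bridge_swap)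
  have sub: "DA \<subseteq> A" "DB \<subseteq> B" using DA DB by (auto simp: dissociation_set_def)
  have "{w \<in> DA \<union> DB. adj EAB z w} = {w \<in> DB. adj EB z w}" if "z \<in> DB" for z
    using swap.nbrs_in_A[OF sub(2,1) _ that] xy EAB_swap by (auto simp: Un_commute)
  thus ?thesis
    using nbrs_in_A[OF sub xy] DA DB sub by (auto simp: dissociation_set_def)
qed

lemma diss_le: "diss (A \<union> B) EAB \<le> diss A EA + diss B EB"
proof -
  have fin: "finite (A \<union> B)" using finite_A finite_B by simp
  obtain D where D: "max_dissociation_set (A \<union> B) EAB D"
    using ex_max_dissociation_set[OF fin] by blast
  hence ds: "dissociation_set (A \<union> B) EAB D" and fD: "finite D"
    using dissociation_set_finite[OF fin] by (auto simp: max_dissociation_set_def)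
  have "D = (D \<inter> A) \<union> (D \<inter> B)" using ds by (auto simp: dissociation_set_def)
  hence "card D \<le> card (D \<inter> A) + card (D \<inter> B)" by (metis card_Un_le)
  also have "card (D \<inter> A) \<le> diss A EA"
    by (rule card_le_diss[OF finite_A dissociation_set_restrict[OF ds fD]]) auto
  also have "card (D \<inter> B) \<le> diss B EB"
    by (rule card_le_diss[OF finite_B dissociation_set_restrict[OF ds fD]]) auto
  finally show ?thesis using D by (simp add: max_dissociation_set_def)
qed

lemma max_dissociation_set_Un:
  assumes DA: "max_dissociation_set A EA DA" and DB: "max_dissociation_set B EB DB"
    and xy: "x \<notin> DA \<or> y \<notin> DB"
  shows "max_dissociation_set (A \<union> B) EAB (DA \<union> DB)"
    and "diss (A \<union> B) EAB = diss A EA + diss B EB"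
proof -
  have ds: "dissociation_set (A \<union> B) EAB (DA \<union> DB)"
    using dissociation_set_Un DA DB xy by (auto simp: max_dissociation_set_def)
  have "finite DA" "finite DB"
    using DA DB dissociation_set_finite finite_A finite_B by (auto simp: max_dissociation_set_def)
  moreover have "DA \<inter> DB = {}"
    using DA DB disjoint by (auto simp: max_dissociation_set_def dissociation_set_def)
  ultimately have card: "card (DA \<union> DB) = diss A EA + diss B EB"
    using DA DB by (simp add: card_Un_disjoint max_dissociation_set_def)
  have fin: "finite (A \<union> B)" using finite_A finite_B by simp
  have "card (DA \<union> DB) \<le> diss (A \<union> B) EAB" by (rule card_le_diss[OF fin ds])
  thus "diss (A \<union> B) EAB = diss A EA + diss B EB" using card diss_le by simp
  thus "max_dissociation_set (A \<union> B) EAB (DA \<union> DB)"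
    using ds card by (simp add: max_dissociation_set_def)
qed

lemma avoidable_Un:
  assumes "avoidable A EA" "avoidable B EB"
  shows "avoidable (A \<union> B) EAB"
  unfolding avoidable_def
proof
  fix u assume u: "u \<in> A \<union> B"
  obtain DA DB where DA: "max_dissociation_set A EA DA" and DB: "max_dissociation_set B EB DB"
    and xy: "x \<notin> DA \<or> y \<notin> DB" and "u \<notin> DA" "u \<notin> DB"
  proof (cases "u \<in> A")
    case True
    obtain DA where "max_dissociation_set A EA DA" "u \<notin> DA"
      using assms(1) True by (auto simp: avoidable_def)
    moreover obtain DB where "max_dissociation_set B EB DB" "y \<notin> DB"
      using assms(2) y_in_B by (auto simp: avoidable_def)
    moreover have "u \<notin> DB"
      using calculation True disjoint by (auto simp: max_dissociation_set_def dissociation_set_def)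
    ultimately show ?thesis using that by blast
  next
    case False
    obtain DB where "max_dissociation_set B EB DB" "u \<notin> DB"
      using assms(2) False u by (auto simp: avoidable_def)
    moreover obtain DA where "max_dissociation_set A EA DA" "x \<notin> DA"
      using assms(1) x_in_A by (auto simp: avoidable_def)
    moreover have "u \<notin> DA"
      using calculation False by (auto simp: max_dissociation_set_def dissociation_set_def)
    ultimately show ?thesis using that by blast
  qed
  thus "\<exists>D. max_dissociation_set (A \<union> B) EAB D \<and> u \<notin> D"
    using max_dissociation_set_Un(1) by blast
qed

lemma diss_Un:
  assumes "avoidable A EA"
  shows "diss (A \<union> B) EAB = diss A EA + diss B EB"
proof -
  obtain DA where "max_dissociation_set A EA DA" "x \<notin> DA"
    using assms x_in_A by (auto simp: avoidable_def)
  moreover obtain DB where "max_dissociation_set B EB DB"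
    using ex_max_dissociation_set[OF finite_B] by blast
  ultimately show ?thesis using max_dissociation_set_Un(2) by blast
qed

lemma simple_graph_Un: "simple_graph (A \<union> B) EAB"
  unfolding simple_graph_def
proof
  fix e assume e: "e \<in> EAB"
  have "x \<noteq> y" using x_in_A y_in_B disjoint by auto
  moreover have "e \<in> EA \<Longrightarrow> \<exists>a b. a \<noteq> b \<and> a \<in> A \<union> B \<and> b \<in> A \<union> B \<and> e = {a, b}"
    using simple_A unfolding simple_graph_def by (meson UnCI)
  moreover have "e \<in> EB \<Longrightarrow> \<exists>a b. a \<noteq> b \<and> a \<in> A \<union> B \<and> b \<in> A \<union> B \<and> e = {a, b}"
    using simple_B unfolding simple_graph_def by (meson UnCI)
  ultimately show "\<exists>a b. a \<noteq> b \<and> a \<in> A \<union> B \<and> b \<in> A \<union> B \<and> e = {a, b}"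
    using e x_in_A y_in_B by blast
qed

lemma card_EAB: "card EAB = card EA + card EB + 1"
proof -
  have fin: "finite EA" "finite EB"
    using simple_graph_finite_edges simple_A simple_B finite_A finite_B by auto
  have "EA \<inter> EB = {}"
  proof (intro equals0I)
    fix e assume "e \<in> EA \<inter> EB"
    moreover obtain a b where "e = {a, b}" using calculation simple_A by (auto simp: simple_graph_def)
    ultimately show False
      using simple_graph_edge_subset[OF simple_A] simple_graph_edge_subset[OF simple_B] disjoint
      by blast
  qed
  moreover have "{x, y} \<notin> EA \<union> EB"
    using simple_graph_edge_subset[OF simple_A] simple_graph_edge_subset[OF simple_B]
      x_in_A y_in_B disjoint by blast
  ultimately show ?thesis using fin by (simp add: card_Un_disjoint)
qed

end

lemma reach_step: "x \<in> V \<Longrightarrow> y \<in> V \<Longrightarrow> adj E x y \<Longrightarrow> reach V E x y"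
  unfolding reach_def by (rule r_into_rtranclp) simp

lemma reach_refl: "reach V E x x"
  unfolding reach_def by simp

lemma reach_trans: "reach V E x y \<Longrightarrow> reach V E y z \<Longrightarrow> reach V E x z"
  unfolding reach_def by (rule rtranclp_trans)

lemma reach_sym: "reach V E x y \<Longrightarrow> reach V E y x"
  unfolding reach_def
proof (induction rule: rtranclp.induct)
  case (rtrancl_into_rtrancl a b c)
  have "(\<lambda>x y. x \<in> V \<and> y \<in> V \<and> adj E x y) c b" using rtrancl_into_rtrancl(2) adj_commute by metis
  thus ?case using rtrancl_into_rtrancl(3) by (rule converse_rtranclp_into_rtranclp)
qed simp

lemma reach_mono: "V \<subseteq> V' \<Longrightarrow> E \<subseteq> E' \<Longrightarrow> reach V E x y \<Longrightarrow> reach V' E' x y"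
  unfolding reach_def by (erule rtranclp_mono[THEN predicate2D, rotated]) (auto simp: adj_def)

definition connected :: "'a set \<Rightarrow> 'a set set \<Rightarrow> bool" where
  "connected V E \<longleftrightarrow> (\<forall>x\<in>V. \<forall>y\<in>V. reach V E x y)"

lemma connectedI_root: "r \<in> V \<Longrightarrow> (\<And>x. x \<in> V \<Longrightarrow> reach V E r x) \<Longrightarrow> connected V E"
  unfolding connected_def by (meson reach_sym reach_trans)

lemma components_connected: "connected V E \<Longrightarrow> V \<noteq> {} \<Longrightarrow> components V E = {V}"
  unfolding components_def connected_def by auto

lemma ex_index_leaving:
  fixes P :: "nat \<Rightarrow> bool"
  assumes "a < l" "P a" "b < l" "\<not> P b"
  shows "\<exists>i<l. P i \<and> \<not> P (Suc i mod l)"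
proof (rule ccontr)
  assume "\<not> ?thesis"
  hence step: "\<And>i. i < l \<Longrightarrow> P i \<Longrightarrow> P (Suc i mod l)" by blast
  have "P ((a + t) mod l)" for t
  proof (induction t)
    case (Suc t)
    have "P (Suc ((a + t) mod l) mod l)" using step Suc assms(1) by simp
    thus ?case by (simp add: mod_Suc_eq)
  qed (use assms in simp)
  from this[of "b + l - a"] show False using assms by simp
qed

lemma add_2_mod_neq: "(j::nat) < l \<Longrightarrow> 3 \<le> l \<Longrightarrow> (j + 2) mod l \<noteq> j"
proof
  assume a: "j < l" "3 \<le> l" "(j + 2) mod l = j"
  show False
  proof (cases "j + 2 < l")
    case False
    hence "(j + 2) mod l = (j + 2 - l) mod l" by (simp add: le_mod_geq)
    also have "\<dots> = j + 2 - l" using a(1,2) False by simp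
    finally show False using a False by simp
  qed (use a in simp)
qed

lemma cycle_edges_nth: "i < length vs \<Longrightarrow> {vs ! i, vs ! (Suc i mod length vs)} \<in> cycle_edges vs"
  unfolding cycle_edges_def by auto

lemma induced_cycle_sets_nonempty: "S \<in> induced_cycle_sets V E \<Longrightarrow> S \<noteq> {}"
  unfolding induced_cycle_sets_def is_cycle_graph_def by auto

lemma finite_induced_cycle_sets: "finite V \<Longrightarrow> finite (induced_cycle_sets V E)"
  unfolding induced_cycle_sets_def by (rule finite_subset[of _ "Pow V"]) auto

definition cycles_1mod3 :: "'a set \<Rightarrow> 'a set set \<Rightarrow> nat" where
  "cycles_1mod3 V E = card {S \<in> induced_cycle_sets V E. card S mod 3 = 1}"

context bridge
begin

lemma connected_Un:
  assumes "connected A EA" "connected B EB"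
  shows "connected (A \<union> B) EAB"
proof (rule connectedI_root)
  fix z assume z: "z \<in> A \<union> B"
  show "reach (A \<union> B) EAB x z"
  proof (cases "z \<in> A")
    case True
    thus ?thesis using assms(1) x_in_A reach_mono[of A "A \<union> B" EA EAB x z]
      by (auto simp: connected_def)
  next
    case False
    have "reach (A \<union> B) EAB x y" using x_in_A y_in_B by (intro reach_step) (auto simp: adj_def)
    moreover have "reach (A \<union> B) EAB y z"
      using assms(2) y_in_B False z reach_mono[of B "A \<union> B" EB EAB y z] by (auto simp: connected_def)
    ultimately show ?thesis by (rule reach_trans)
  qed
qed (use x_in_A in simp)

lemma induced_edges_in_A: "S \<subseteq> A \<Longrightarrow> {e \<in> EAB. e \<subseteq> S} = {e \<in> EA. e \<subseteq> S}"
  using simple_B disjoint y_in_B unfolding simple_graph_def by fastforce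

lemma induced_edges_in_B: "S \<subseteq> B \<Longrightarrow> {e \<in> EAB. e \<subseteq> S} = {e \<in> EB. e \<subseteq> S}"
proof -
  interpret swap: bridge B EB A EA y x by (rule bridge_swap)
  show "S \<subseteq> B \<Longrightarrow> ?thesis" using swap.induced_edges_in_A unfolding EAB_swap .
qed

text \<open>A cycle meeting both sides would have to cross the bridge twice, in opposite directions,
  which forces it to have length 2.\<close>

lemma induced_cycle_one_side:
  assumes S: "S \<subseteq> A \<union> B" and cyc: "is_cycle_graph vs S {e \<in> EAB. e \<subseteq> S}"
  shows "S \<subseteq> A \<or> S \<subseteq> B"
proof (rule ccontr)
  assume "\<not> ?thesis"
  then obtain a b where a: "a \<in> S" "a \<in> A" and b: "b \<in> S" "b \<in> B" using S by blast
  let ?l = "length vs"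
  let ?nx = "\<lambda>i. Suc i mod ?l"
  have l3: "3 \<le> ?l" and dist: "distinct vs" and Sv: "S = set vs"
    and ce: "cycle_edges vs = {e \<in> EAB. e \<subseteq> S}"
    using cyc unfolding is_cycle_graph_def by metis+
  have edges: "i < ?l \<Longrightarrow> {vs ! i, vs ! ?nx i} \<in> EAB" for i
    using cycle_edges_nth[of i vs] unfolding ce by blast
  have nx: "?nx i < ?l" for i using l3 by (intro mod_less_divisor) linarith
  have side: "i < ?l \<Longrightarrow> vs ! i \<in> A \<or> vs ! i \<in> B" for i using S Sv by auto
  have cross: "{vs ! i, vs ! ?nx i} = {x, y}"
    if "i < ?l" "vs ! i \<in> C" "vs ! ?nx i \<notin> C" "C = A \<or> C = B" for i C
  proof -
    have "vs ! ?nx i \<in> A \<union> B - C" using side[OF nx] that by auto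
    hence "{vs ! i, vs ! ?nx i} \<notin> EA \<union> EB"
      using that disjoint simple_graph_edge_subset[OF simple_A] simple_graph_edge_subset[OF simple_B]
      by blast
    thus ?thesis using edges[OF that(1)] by blast
  qed
  obtain ia ib where ia: "ia < ?l" "vs ! ia = a" and ib: "ib < ?l" "vs ! ib = b"
    using a(1) b(1) Sv by (metis in_set_conv_nth)
  obtain i where i: "i < ?l" "vs ! i \<in> A" "vs ! ?nx i \<notin> A"
    using ex_index_leaving[of ia ?l "\<lambda>i. vs ! i \<in> A" ib] ia ib a b disjoint by blast
  obtain j where j: "j < ?l" "vs ! j \<in> B" "vs ! ?nx j \<notin> B"
    using ex_index_leaving[of ib ?l "\<lambda>i. vs ! i \<in> B" ia] ia ib a b disjoint by blast
  have "vs ! i = x" "vs ! ?nx i = y"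
    using cross[OF i disjI1, OF refl] i(2) x_in_A y_in_B disjoint by (auto simp: doubleton_eq_iff)
  moreover have "vs ! j = y" "vs ! ?nx j = x"
    using cross[OF j disjI2, OF refl] j(2) x_in_A y_in_B disjoint by (auto simp: doubleton_eq_iff)
  ultimately have "i = ?nx j" "j = ?nx i" using dist i(1) j(1) nx nth_eq_iff_index_eq by metis+
  hence "j = Suc (?nx j) mod ?l" by simp
  hence "(j + 2) mod ?l = j" by (simp add: mod_Suc_eq)
  thus False using add_2_mod_neq j(1) l3 by blast
qed

lemma induced_cycle_sets_Un:
  "induced_cycle_sets (A \<union> B) EAB = induced_cycle_sets A EA \<union> induced_cycle_sets B EB"
proof (intro equalityI subsetI)
  fix S assume "S \<in> induced_cycle_sets (A \<union> B) EAB"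
  then obtain vs where "S \<subseteq> A \<union> B" "is_cycle_graph vs S {e \<in> EAB. e \<subseteq> S}"
    by (auto simp: induced_cycle_sets_def)
  thus "S \<in> induced_cycle_sets A EA \<union> induced_cycle_sets B EB"
    using induced_cycle_one_side induced_edges_in_A induced_edges_in_B
    by (metis (mono_tags, lifting) UnCI induced_cycle_sets_def mem_Collect_eq)
next
  fix S assume "S \<in> induced_cycle_sets A EA \<union> induced_cycle_sets B EB"
  thus "S \<in> induced_cycle_sets (A \<union> B) EAB"
    using induced_edges_in_A induced_edges_in_B by (auto simp: induced_cycle_sets_def)
qed

lemma cycles_1mod3_Un: "cycles_1mod3 (A \<union> B) EAB = cycles_1mod3 A EA + cycles_1mod3 B EB"
proof -
  have "induced_cycle_sets A EA \<inter> induced_cycle_sets B EB = {}"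
    using induced_cycle_sets_nonempty disjoint by (fastforce simp: induced_cycle_sets_def)
  hence "{S \<in> induced_cycle_sets A EA. card S mod 3 = 1} \<inter> {S \<in> induced_cycle_sets B EB. card S mod 3 = 1} = {}"
    by blast
  moreover have "{S \<in> induced_cycle_sets (A \<union> B) EAB. card S mod 3 = 1} =
      {S \<in> induced_cycle_sets A EA. card S mod 3 = 1} \<union> {S \<in> induced_cycle_sets B EB. card S mod 3 = 1}"
    using induced_cycle_sets_Un by auto
  ultimately show ?thesis unfolding cycles_1mod3_def
    using finite_induced_cycle_sets[OF finite_A] finite_induced_cycle_sets[OF finite_B]
    by (simp add: card_Un_disjoint)
qed

end

text \<open>The formula of the theorem for connected graphs (\<open>k = 1\<close>), multiplied by 3.\<close>

definition extremal :: "'a set \<Rightarrow> 'a set set \<Rightarrow> bool" where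
  "extremal V E \<longleftrightarrow> finite V \<and> V \<noteq> {} \<and> simple_graph V E \<and> connected V E
     \<and> 3 * diss V E + card E + 1 + cycles_1mod3 V E = 3 * card V \<and> avoidable V E"

lemma extremal_bridge:
  assumes "extremal A EA" "extremal B EB" "A \<inter> B = {}" "x \<in> A" "y \<in> B"
  shows "extremal (A \<union> B) (EA \<union> EB \<union> {{x, y}})"
proof -
  interpret bridge A EA B EB x y using assms by unfold_locales (auto simp: extremal_def)
  show ?thesis
    using assms(1,2) x_in_A diss_Un card_EAB cycles_1mod3_Un simple_graph_Un connected_Un avoidable_Un
      card_Un_disjoint[OF finite_A finite_B disjoint]
    unfolding extremal_def by auto
qed

section \<open>Spiked cycles\<close>

lemma Suc_mod_eq_imp_pred:
  assumes "i < l" "Suc i mod l = a"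
  shows "i = (a + l - 1) mod l"
proof (cases "Suc i < l")
  case True
  hence "a = Suc i" using assms by simp
  thus ?thesis using assms by simp
next
  case False
  hence "Suc i = l" using assms by simp
  thus ?thesis using assms by simp
qed

lemma Suc_pred_mod: "a < (l::nat) \<Longrightarrow> Suc ((a + l - 1) mod l) mod l = a"
  by (cases a) (auto simp: mod_Suc_eq)

lemma cycle_graph_two_nbrs:
  assumes cyc: "is_cycle_graph vs S ES" and sub: "ES \<subseteq> E" and z: "z \<in> S"
  shows "\<exists>y w. y \<in> S \<and> w \<in> S \<and> y \<noteq> w \<and> adj E z y \<and> adj E z w"
proof -
  let ?l = "length vs"
  have l3: "3 \<le> ?l" and dist: "distinct vs" and Sv: "S = set vs" and ES: "ES = cycle_edges vs"
    using cyc by (auto simp: is_cycle_graph_def)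
  have l0: "0 < ?l" using l3 by linarith
  obtain i where i: "i < ?l" "vs ! i = z" using z Sv by (metis in_set_conv_nth)
  define p where "p = (i + ?l - 1) mod ?l"
  have p: "p < ?l" and sp: "Suc p mod ?l = i"
    using l0 Suc_pred_mod[OF i(1)] by (simp_all add: p_def)
  have si: "Suc i mod ?l < ?l" using l0 by simp
  have "Suc i mod ?l \<noteq> p"
  proof
    assume "Suc i mod ?l = p"
    hence "Suc (Suc i mod ?l) mod ?l = i" using sp by simp
    hence "(i + 2) mod ?l = i" by (simp add: mod_Suc_eq)
    thus False using add_2_mod_neq[OF i(1) l3] by simp
  qed
  hence "vs ! (Suc i mod ?l) \<noteq> vs ! p" using dist si p nth_eq_iff_index_eq by metis
  moreover have "adj E z (vs ! (Suc i mod ?l))" "adj E z (vs ! p)"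
    using cycle_edges_nth[OF i(1)] cycle_edges_nth[OF p] sub i sp ES
    by (auto simp: adj_def insert_commute)
  moreover have "vs ! (Suc i mod ?l) \<in> S" "vs ! p \<in> S" using Sv si p by auto
  ultimately show ?thesis by blast
qed

text \<open>Unlike \<open>is_spiked_cycle\<close>, the spike set may be empty, so plain cycles are covered too.\<close>

locale spiked_cycle =
  fixes us :: "'a list" and I :: "nat set" and sp :: "nat \<Rightarrow> 'a" and V :: "'a set" and E :: "'a set set"
  assumes length_ge_3: "3 \<le> length us" and distinct_us: "distinct us"
    and spikes_below: "I \<subseteq> {..<length us}" and inj_sp: "inj_on sp I"
    and spikes_disjoint: "sp ` I \<inter> set us = {}"
    and V_eq: "V = set us \<union> sp ` I"
    and E_eq: "E = cycle_edges us \<union> {{us ! i, sp i} | i. i \<in> I}"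
begin

abbreviation L :: nat where "L \<equiv> length us"

lemma L_pos: "0 < L" using length_ge_3 by linarith

lemma Suc_mod_L: "Suc i mod L < L" using L_pos by simp

lemma spike_below: "i \<in> I \<Longrightarrow> i < L" using spikes_below by auto

lemma finite_I: "finite I" using spikes_below finite_subset by blast

lemma finite_V: "finite V" using V_eq finite_I by simp

lemma spike_notin: "i \<in> I \<Longrightarrow> sp i \<notin> set us" using spikes_disjoint by auto

lemma nth_eq_iff: "a < L \<Longrightarrow> b < L \<Longrightarrow> us ! a = us ! b \<longleftrightarrow> a = b"
  using distinct_us nth_eq_iff_index_eq by metis

lemma nth_neq_spike: "a < L \<Longrightarrow> i \<in> I \<Longrightarrow> us ! a \<noteq> sp i"
  using spike_notin by (metis nth_mem)

lemma sp_eq_iff: "i \<in> I \<Longrightarrow> j \<in> I \<Longrightarrow> sp i = sp j \<longleftrightarrow> i = j"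
  using inj_sp by (auto simp: inj_on_def)

lemma adj_iff:
  "adj E a b \<longleftrightarrow> (\<exists>i<L. {a, b} = {us ! i, us ! (Suc i mod L)}) \<or> (\<exists>i\<in>I. {a, b} = {us ! i, sp i})"
  unfolding adj_def E_eq cycle_edges_def by blast

lemma adj_next: "i < L \<Longrightarrow> adj E (us ! i) (us ! (Suc i mod L))"
  using adj_iff by blast

lemma adj_prev: "i < L \<Longrightarrow> adj E (us ! i) (us ! ((i + L - 1) mod L))"
proof -
  assume i: "i < L"
  have "adj E (us ! ((i + L - 1) mod L)) (us ! (Suc ((i + L - 1) mod L) mod L))"
    using adj_next L_pos by simp
  thus ?thesis using Suc_pred_mod[OF i] adj_commute by metis
qed

lemma adj_spike: "i \<in> I \<Longrightarrow> adj E (us ! i) (sp i)"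
  using adj_iff by blast

lemma nbr_of_spike: assumes "i \<in> I" "adj E (sp i) b" shows "b = us ! i"
  using assms(2)[unfolded adj_iff]
proof
  assume "\<exists>j<L. {sp i, b} = {us ! j, us ! (Suc j mod L)}"
  then obtain j where j: "j < L" "{sp i, b} = {us ! j, us ! (Suc j mod L)}" by blast
  hence "sp i \<in> {us ! j, us ! (Suc j mod L)}" by blast
  hence "sp i \<in> set us" using j(1) Suc_mod_L[of j] by auto
  thus ?thesis using spike_notin assms(1) by blast
next
  assume "\<exists>j\<in>I. {sp i, b} = {us ! j, sp j}"
  then obtain j where j: "j \<in> I" "{sp i, b} = {us ! j, sp j}" by blast
  show ?thesis
  proof (cases "sp i = us ! j")
    case True thus ?thesis using nth_neq_spike[OF spike_below[OF j(1)] assms(1)] by simp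
  next
    case False
    hence "sp i = sp j" "b = us ! j" using j(2) by (auto simp: doubleton_eq_iff)
    thus ?thesis using sp_eq_iff assms(1) j(1) by simp
  qed
qed

lemma nbr_of_nth:
  assumes a: "a < L" and ab: "adj E (us ! a) b"
  shows "b = us ! (Suc a mod L) \<or> b = us ! ((a + L - 1) mod L) \<or> (a \<in> I \<and> b = sp a)"
  using ab[unfolded adj_iff]
proof
  assume "\<exists>j<L. {us ! a, b} = {us ! j, us ! (Suc j mod L)}"
  then obtain j where j: "j < L" "{us ! a, b} = {us ! j, us ! (Suc j mod L)}" by blast
  show ?thesis
  proof (cases "us ! a = us ! j")
    case True
    hence "a = j" using nth_eq_iff a j by simp
    thus ?thesis using j(2) True by (auto simp: doubleton_eq_iff)
  next
    case False
    hence "us ! a = us ! (Suc j mod L)" "b = us ! j" using j(2) by (auto simp: doubleton_eq_iff)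
    hence "a = Suc j mod L" using nth_eq_iff a Suc_mod_L by simp
    thus ?thesis using Suc_mod_eq_imp_pred j(1) \<open>b = us ! j\<close> by simp
  qed
next
  assume "\<exists>j\<in>I. {us ! a, b} = {us ! j, sp j}"
  then obtain j where j: "j \<in> I" "{us ! a, b} = {us ! j, sp j}" by blast
  show ?thesis
  proof (cases "us ! a = us ! j")
    case True
    hence "a = j" using nth_eq_iff a spike_below[OF j(1)] by simp
    thus ?thesis using j True by (auto simp: doubleton_eq_iff)
  next
    case False
    hence "us ! a = sp j" using j(2) by (auto simp: doubleton_eq_iff)
    thus ?thesis using nth_neq_spike[OF a j(1)] by simp
  qed
qed

lemma next_neq: "i < L \<Longrightarrow> us ! i \<noteq> us ! (Suc i mod L)"
proof
  assume i: "i < L" and eq: "us ! i = us ! (Suc i mod L)"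
  hence "Suc i mod L = i" using nth_eq_iff Suc_mod_L by simp
  hence "Suc (Suc i mod L) mod L = i" by simp
  hence "(i + 2) mod L = i" by (simp add: mod_Suc_eq)
  thus False using add_2_mod_neq[OF i length_ge_3] by simp
qed

lemma simple_graph: "simple_graph V E"
  unfolding simple_graph_def
proof
  fix e assume "e \<in> E"
  hence "(\<exists>i<L. e = {us ! i, us ! (Suc i mod L)}) \<or> (\<exists>i\<in>I. e = {us ! i, sp i})"
    unfolding E_eq cycle_edges_def by blast
  thus "\<exists>a b. a \<noteq> b \<and> a \<in> V \<and> b \<in> V \<and> e = {a, b}"
  proof
    assume "\<exists>i<L. e = {us ! i, us ! (Suc i mod L)}"
    then obtain i where "i < L" "e = {us ! i, us ! (Suc i mod L)}" by blast
    thus ?thesis using next_neq Suc_mod_L V_eq by (intro exI[of _ "us ! i"] exI[of _ "us ! (Suc i mod L)"]) auto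
  next
    assume "\<exists>i\<in>I. e = {us ! i, sp i}"
    then obtain i where "i \<in> I" "e = {us ! i, sp i}" by blast
    thus ?thesis using nth_neq_spike spike_below V_eq by (intro exI[of _ "us ! i"] exI[of _ "sp i"]) auto
  qed
qed

lemma connected: "connected V E"
proof (rule connectedI_root)
  have nth: "reach V E (us ! 0) (us ! j)" if "j < L" for j
    using that
  proof (induction j)
    case (Suc j)
    have "adj E (us ! j) (us ! Suc j)" using adj_next[of j] Suc.prems by simp
    hence "reach V E (us ! j) (us ! Suc j)" using Suc.prems V_eq by (intro reach_step) auto
    thus ?case using Suc reach_trans by simp
  qed (simp add: reach_refl)
  fix x assume "x \<in> V"
  hence "x \<in> set us \<or> (\<exists>i\<in>I. x = sp i)" using V_eq by auto
  thus "reach V E (us ! 0) x"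
  proof
    assume "x \<in> set us" thus ?thesis using nth by (metis in_set_conv_nth)
  next
    assume "\<exists>i\<in>I. x = sp i"
    then obtain i where i: "i \<in> I" "x = sp i" by blast
    have "reach V E (us ! i) (sp i)"
      using adj_spike[OF i(1)] V_eq spike_below[OF i(1)] i by (intro reach_step) auto
    thus ?thesis using nth[OF spike_below[OF i(1)]] i reach_trans by metis
  qed
qed (use V_eq L_pos in simp)

lemma card_V: "card V = L + card I"
  using V_eq spikes_disjoint finite_I card_image[OF inj_sp] distinct_card[OF distinct_us]
    card_Un_disjoint[of "set us" "sp ` I"] by (simp add: Int_commute)

lemma card_cycle_edges: "card (cycle_edges us) = L"
proof -
  have "cycle_edges us = (\<lambda>i. {us ! i, us ! (Suc i mod L)}) ` {..<L}"
    unfolding cycle_edges_def by auto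
  moreover have "inj_on (\<lambda>i. {us ! i, us ! (Suc i mod L)}) {..<L}"
  proof (rule inj_onI)
    fix i j assume i: "i \<in> {..<L}" and j: "j \<in> {..<L}"
      and eq: "{us ! i, us ! (Suc i mod L)} = {us ! j, us ! (Suc j mod L)}"
    show "i = j"
    proof (rule ccontr)
      assume "i \<noteq> j"
      hence "us ! i = us ! (Suc j mod L)" "us ! (Suc i mod L) = us ! j"
        using eq nth_eq_iff i j by (auto simp: doubleton_eq_iff)
      hence "i = Suc j mod L" "Suc i mod L = j" using nth_eq_iff i j Suc_mod_L by auto
      hence "(j + 2) mod L = j" by (simp add: mod_Suc_eq)
      thus False using add_2_mod_neq[of j L] j length_ge_3 by simp
    qed
  qed
  ultimately show ?thesis by (simp add: card_image)
qed

lemma cycle_edges_subset: "e \<in> cycle_edges us \<Longrightarrow> e \<subseteq> set us"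
  unfolding cycle_edges_def using Suc_mod_L by auto

lemma card_E: "card E = L + card I"
proof -
  have "{{us ! i, sp i} | i. i \<in> I} = (\<lambda>i. {us ! i, sp i}) ` I" by auto
  moreover have "inj_on (\<lambda>i. {us ! i, sp i}) I"
  proof (rule inj_onI)
    fix i j assume i: "i \<in> I" and j: "j \<in> I" and eq: "{us ! i, sp i} = {us ! j, sp j}"
    hence "us ! i = us ! j" using nth_neq_spike[OF spike_below[OF i] j] by (auto simp: doubleton_eq_iff)
    thus "i = j" using nth_eq_iff spike_below i j by simp
  qed
  moreover have "cycle_edges us \<inter> {{us ! i, sp i} | i. i \<in> I} = {}"
    using cycle_edges_subset spike_notin by blast
  moreover have "finite (cycle_edges us)" unfolding cycle_edges_def by simp
  ultimately show ?thesis
    using E_eq card_cycle_edges finite_I by (simp add: card_Un_disjoint card_image)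
qed

text \<open>A spike has degree one, so the only induced cycle is the rim.\<close>

lemma induced_cycle_sets: "induced_cycle_sets V E = {set us}"
proof (intro equalityI subsetI)
  fix S assume "S \<in> induced_cycle_sets V E"
  then obtain vs where SV: "S \<subseteq> V" and cyc: "is_cycle_graph vs S {e \<in> E. e \<subseteq> S}"
    by (auto simp: induced_cycle_sets_def)
  note two = cycle_graph_two_nbrs[OF cyc, of E]
  have no_spike: "sp i \<notin> S" if "i \<in> I" for i
    using two nbr_of_spike[OF that] by blast
  hence Sus: "S \<subseteq> set us" using SV V_eq by auto
  have "S \<noteq> {}" using cyc by (auto simp: is_cycle_graph_def)
  then obtain z where "z \<in> S" by blast
  then obtain a where a: "a < L" "us ! a \<in> S" using Sus by (metis in_set_conv_nth subsetD)
  have closed: "us ! (Suc i mod L) \<in> S" if i: "i < L" "us ! i \<in> S" for i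
  proof (rule ccontr)
    assume nS: "us ! (Suc i mod L) \<notin> S"
    obtain y w where yw: "y \<in> S" "w \<in> S" "y \<noteq> w" "adj E (us ! i) y" "adj E (us ! i) w"
      using two i(2) by blast
    have "y = us ! ((i + L - 1) mod L)" "w = us ! ((i + L - 1) mod L)"
      using nbr_of_nth[OF i(1) yw(4)] nbr_of_nth[OF i(1) yw(5)] yw(1,2) nS no_spike by auto
    thus False using yw(3) by simp
  qed
  have "us ! b \<in> S" if "b < L" for b
    using ex_index_leaving[of a L "\<lambda>i. us ! i \<in> S" b] a that closed by blast
  hence "set us \<subseteq> S" by (auto simp: in_set_conv_nth)
  thus "S \<in> {set us}" using Sus by auto
next
  fix S assume "S \<in> {set us}"
  moreover have "{e \<in> E. e \<subseteq> set us} = cycle_edges us"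
    using E_eq cycle_edges_subset spike_notin by auto
  moreover have "is_cycle_graph us (set us) (cycle_edges us)"
    using length_ge_3 distinct_us by (simp add: is_cycle_graph_def)
  ultimately show "S \<in> induced_cycle_sets V E"
    using V_eq by (auto simp: induced_cycle_sets_def)
qed

lemma cycles_1mod3: "cycles_1mod3 V E = (if L mod 3 = 1 then 1 else 0)"
proof -
  have "{S \<in> {set us}. card S mod 3 = 1} = (if L mod 3 = 1 then {set us} else {})"
    using distinct_card[OF distinct_us] by auto
  thus ?thesis unfolding cycles_1mod3_def induced_cycle_sets by simp
qed

end

section \<open>Caterpillars\<close>

text \<open>A caterpillar is encoded by its spine \<open>w\<^sub>1 \<dots> w\<^sub>m\<close>, each spine vertex carrying an optional
  leaf. Taking two vertices out of every block of three along the spine yields a dissociation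
  set with at least two thirds of the vertices.\<close>

fun cat_verts :: "('a \<times> 'a option) list \<Rightarrow> 'a list" where
  "cat_verts [] = []"
| "cat_verts ((w, None) # bs) = w # cat_verts bs"
| "cat_verts ((w, Some x) # bs) = w # x # cat_verts bs"

fun cat_edges :: "('a \<times> 'a option) list \<Rightarrow> 'a set set" where
  "cat_edges [] = {}"
| "cat_edges ((w, xo) # bs) = (case xo of None \<Rightarrow> {} | Some x \<Rightarrow> {{w, x}}) \<union>
     (if bs = [] then {} else {{w, fst (hd bs)}}) \<union> cat_edges bs"

definition cat_induced :: "'a set set \<Rightarrow> ('a \<times> 'a option) list \<Rightarrow> bool" where
  "cat_induced E bs \<longleftrightarrow>
     (\<forall>a\<in>set (cat_verts bs). \<forall>b\<in>set (cat_verts bs). adj E a b \<longrightarrow> {a, b} \<in> cat_edges bs)"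

lemma cat_verts_append: "cat_verts (xs @ ys) = cat_verts xs @ cat_verts ys"
  by (induction xs rule: cat_verts.induct) auto

lemma hd_in_cat_verts: "bs \<noteq> [] \<Longrightarrow> fst (hd bs) \<in> set (cat_verts bs)"
  by (cases bs rule: cat_verts.cases) auto

lemma last_in_cat_verts: "bs \<noteq> [] \<Longrightarrow> fst (last bs) \<in> set (cat_verts bs)"
  by (induction bs rule: cat_verts.induct) auto

lemma cat_edges_subset: "e \<in> cat_edges bs \<Longrightarrow> e \<subseteq> set (cat_verts bs)"
  by (induction bs rule: cat_verts.induct) (auto dest: hd_in_cat_verts split: if_splits)

lemma cat_edges_append:
  "cat_edges (pre @ rest) = cat_edges pre \<union> cat_edges rest \<union>
     (if pre = [] \<or> rest = [] then {} else {{fst (last pre), fst (hd rest)}})"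
  by (induction pre rule: cat_verts.induct) auto

lemma cat_edges_not_singleton: "distinct (cat_verts bs) \<Longrightarrow> {a} \<notin> cat_edges bs"
  by (induction bs rule: cat_verts.induct) (auto dest: hd_in_cat_verts split: if_splits)

lemma cat_nonadj:
  "cat_induced E bs \<Longrightarrow> a \<in> set (cat_verts bs) \<Longrightarrow> b \<in> set (cat_verts bs) \<Longrightarrow>
   {a, b} \<notin> cat_edges bs \<Longrightarrow> \<not> adj E a b"
  unfolding cat_induced_def by blast

lemma cat_no_loop: "distinct (cat_verts bs) \<Longrightarrow> cat_induced E bs \<Longrightarrow> a \<in> set (cat_verts bs) \<Longrightarrow> \<not> adj E a a"
  using cat_nonadj cat_edges_not_singleton by fastforce

lemma cat_induced_append_right:
  assumes "distinct (cat_verts (pre @ rest))" "cat_induced E (pre @ rest)"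
  shows "cat_induced E rest"
  unfolding cat_induced_def
proof (intro ballI impI)
  fix a b assume ab: "a \<in> set (cat_verts rest)" "b \<in> set (cat_verts rest)" "adj E a b"
  hence "{a, b} \<in> cat_edges (pre @ rest)"
    using assms(2) by (auto simp: cat_induced_def cat_verts_append)
  moreover have "fst (last pre) \<notin> set (cat_verts rest)" if "pre \<noteq> []"
    using assms(1) last_in_cat_verts[OF that] by (auto simp: cat_verts_append)
  ultimately show "{a, b} \<in> cat_edges rest"
    using ab cat_edges_subset[of _ pre] assms(1)
    by (auto simp: cat_edges_append cat_verts_append doubleton_eq_iff split: if_splits)
qed

lemma cat_nonadj_prefix:
  assumes "distinct (cat_verts (pre @ rest))" "cat_induced E (pre @ rest)"
    and "a \<in> set (cat_verts pre)" "b \<in> set (cat_verts pre)" "{a, b} \<notin> cat_edges pre"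
  shows "\<not> adj E a b"
proof (rule cat_nonadj[OF assms(2)])
  have "b \<notin> set (cat_verts rest)" "b \<noteq> fst (hd rest)" if "rest \<noteq> []"
    using assms(1,4) hd_in_cat_verts[OF that] by (auto simp: cat_verts_append)
  hence "{a, b} \<notin> cat_edges rest \<and> {a, b} \<noteq> {fst (last pre), fst (hd rest)}" if "rest \<noteq> []"
    using that assms(1,3) cat_edges_subset[of "{a, b}" rest] hd_in_cat_verts[OF that]
    by (auto simp: cat_verts_append doubleton_eq_iff)
  thus "{a, b} \<notin> cat_edges (pre @ rest)" using assms(5) by (auto simp: cat_edges_append)
qed (use assms(3,4) in \<open>auto simp: cat_verts_append\<close>)

lemma caterpillar_step:
  assumes dist: "distinct (cat_verts (pre @ rest))" and ind: "cat_induced E (pre @ rest)"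
    and S: "S \<subseteq> set (cat_verts pre)" "fst (last pre) \<notin> S" "dissociated E S"
      "2 * length (cat_verts pre) \<le> 3 * card S"
    and IH: "distinct (cat_verts rest) \<Longrightarrow> cat_induced E rest \<Longrightarrow>
      \<exists>D \<subseteq> set (cat_verts rest). dissociated E D \<and> 2 * length (cat_verts rest) \<le> 3 * card D"
  shows "\<exists>D \<subseteq> set (cat_verts (pre @ rest)). dissociated E D \<and>
    2 * length (cat_verts (pre @ rest)) \<le> 3 * card D"
proof -
  obtain D where D: "D \<subseteq> set (cat_verts rest)" "dissociated E D" "2 * length (cat_verts rest) \<le> 3 * card D"
    using IH dist cat_induced_append_right[OF dist ind] by (auto simp: cat_verts_append)
  have disj: "S \<inter> D = {}" using S(1) D(1) dist by (auto simp: cat_verts_append)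
  have "\<not> adj E a b" if "a \<in> S" "b \<in> D" for a b
  proof (rule cat_nonadj[OF ind])
    show "a \<in> set (cat_verts (pre @ rest))" "b \<in> set (cat_verts (pre @ rest))"
      using that S(1) D(1) by (auto simp: cat_verts_append)
    have "b \<notin> set (cat_verts pre)" "a \<notin> set (cat_verts rest)"
      using that S(1) D(1) dist by (auto simp: cat_verts_append)
    hence "{a, b} \<notin> cat_edges pre \<union> cat_edges rest" using cat_edges_subset by blast
    moreover have "rest \<noteq> []" using that(2) D(1) by auto
    hence "a \<noteq> fst (last pre)" "a \<noteq> fst (hd rest)"
      using that S(2) S(1) dist hd_in_cat_verts[of rest] by (auto simp: cat_verts_append)
    ultimately show "{a, b} \<notin> cat_edges (pre @ rest)"
      by (auto simp: cat_edges_append doubleton_eq_iff)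
  qed
  hence "dissociated E (S \<union> D)" using dissociated_Un S(3) D(2) by blast
  moreover have "card (S \<union> D) = card S + card D"
    using S(1) D(1) disj by (intro card_Un_disjoint) (auto intro: finite_subset)
  ultimately show ?thesis
    using S D by (intro exI[of _ "S \<union> D"]) (auto simp: cat_verts_append)
qed

fun cat_blocks :: "('a \<times> 'a option) list \<Rightarrow> bool" where
  "cat_blocks [] = True"
| "cat_blocks [(w, None)] = True"
| "cat_blocks [(w, Some x)] = True"
| "cat_blocks [(w1, None), (w2, None)] = True"
| "cat_blocks ((w1, None) # (w2, None) # (w3, None) # r) = cat_blocks r"
| "cat_blocks ((w1, None) # (w2, None) # (w3, Some x3) # r) = cat_blocks r"
| "cat_blocks ((w1, None) # (w2, Some x2) # r) = cat_blocks r"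
| "cat_blocks ((w1, Some x1) # (w2, None) # r) = cat_blocks r"
| "cat_blocks ((w1, Some x1) # (w2, Some x2) # r) = cat_blocks r"

text \<open>\<open>cat_blocks\<close> is only used for its induction rule, which cuts off one block at a time.\<close>

lemma caterpillar_dissociation:
  "distinct (cat_verts bs) \<Longrightarrow> cat_induced E bs \<Longrightarrow>
    \<exists>D \<subseteq> set (cat_verts bs). dissociated E D \<and> 2 * length (cat_verts bs) \<le> 3 * card D"
proof (induction bs rule: cat_blocks.induct)
  case 1 then show ?case by (auto simp: dissociated_def)
next
  case (2 w)
  thus ?case using dissociated_singleton cat_no_loop by (intro exI[of _ "{w}"]) fastforce
next
  case (3 w x)
  thus ?case using dissociated_pair cat_no_loop by (intro exI[of _ "{w, x}"]) fastforce
next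
  case (4 w1 w2)
  thus ?case using dissociated_pair cat_no_loop by (intro exI[of _ "{w1, w2}"]) fastforce
next
  case (5 w1 w2 w3 r)
  let ?pre = "[(w1, None), (w2, None), (w3, None)]"
  have prems: "distinct (cat_verts (?pre @ r))" "cat_induced E (?pre @ r)" using "5.prems" by simp_all
  have "dissociated E {w1, w2}" using cat_no_loop[OF prems] by (intro dissociated_pair) auto
  hence "\<exists>D \<subseteq> set (cat_verts (?pre @ r)). dissociated E D \<and> 2 * length (cat_verts (?pre @ r)) \<le> 3 * card D"
    by (intro caterpillar_step[OF prems _ _ _ _ "5.IH"]) (use prems(1) in \<open>auto simp: cat_verts_append card_insert_if\<close>)
  thus ?case by simp
next
  case (6 w1 w2 w3 x3 r)
  let ?pre = "[(w1, None), (w2, None), (w3, Some x3)]"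
  have prems: "distinct (cat_verts (?pre @ r))" "cat_induced E (?pre @ r)" using "6.prems" by simp_all
  have na1: "\<not> adj E w1 x3" by (rule cat_nonadj_prefix[OF prems]) (use prems(1) in \<open>auto simp: doubleton_eq_iff\<close>)
  have na2: "\<not> adj E w2 x3" by (rule cat_nonadj_prefix[OF prems]) (use prems(1) in \<open>auto simp: doubleton_eq_iff\<close>)
  have "dissociated E {w1, w2, x3}" using cat_no_loop[OF prems] na1 na2 by (intro dissociated_triple) auto
  hence "\<exists>D \<subseteq> set (cat_verts (?pre @ r)). dissociated E D \<and> 2 * length (cat_verts (?pre @ r)) \<le> 3 * card D"
    by (intro caterpillar_step[OF prems _ _ _ _ "6.IH"]) (use prems(1) in \<open>auto simp: cat_verts_append card_insert_if\<close>)
  thus ?case by simp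
next
  case (7 w1 w2 x2 r)
  let ?pre = "[(w1, None), (w2, Some x2)]"
  have prems: "distinct (cat_verts (?pre @ r))" "cat_induced E (?pre @ r)" using "7.prems" by simp_all
  have "dissociated E {w1, x2}" using cat_no_loop[OF prems] by (intro dissociated_pair) auto
  hence "\<exists>D \<subseteq> set (cat_verts (?pre @ r)). dissociated E D \<and> 2 * length (cat_verts (?pre @ r)) \<le> 3 * card D"
    by (intro caterpillar_step[OF prems _ _ _ _ "7.IH"]) (use prems(1) in \<open>auto simp: cat_verts_append card_insert_if\<close>)
  thus ?case by simp
next
  case (8 w1 x1 w2 r)
  let ?pre = "[(w1, Some x1), (w2, None)]"
  have prems: "distinct (cat_verts (?pre @ r))" "cat_induced E (?pre @ r)" using "8.prems" by simp_all
  have "dissociated E {x1, w1}" using cat_no_loop[OF prems] by (intro dissociated_pair) auto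
  hence "\<exists>D \<subseteq> set (cat_verts (?pre @ r)). dissociated E D \<and> 2 * length (cat_verts (?pre @ r)) \<le> 3 * card D"
    by (intro caterpillar_step[OF prems _ _ _ _ "8.IH"]) (use prems(1) in \<open>auto simp: cat_verts_append card_insert_if\<close>)
  thus ?case by simp
next
  case (9 w1 x1 w2 x2 r)
  let ?pre = "[(w1, Some x1), (w2, Some x2)]"
  have prems: "distinct (cat_verts (?pre @ r))" "cat_induced E (?pre @ r)" using "9.prems" by simp_all
  have na1: "\<not> adj E x1 x2" by (rule cat_nonadj_prefix[OF prems]) (use prems(1) in \<open>auto simp: doubleton_eq_iff\<close>)
  have na2: "\<not> adj E w1 x2" by (rule cat_nonadj_prefix[OF prems]) (use prems(1) in \<open>auto simp: doubleton_eq_iff\<close>)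
  have "dissociated E {x1, w1, x2}" using cat_no_loop[OF prems] na1 na2 by (intro dissociated_triple) auto
  hence "\<exists>D \<subseteq> set (cat_verts (?pre @ r)). dissociated E D \<and> 2 * length (cat_verts (?pre @ r)) \<le> 3 * card D"
    by (intro caterpillar_step[OF prems _ _ _ _ "9.IH"]) (use prems(1) in \<open>auto simp: cat_verts_append card_insert_if\<close>)
  thus ?case by simp
qed

lemma set_cat_verts_map:
  "set (cat_verts (map (\<lambda>t. (f t, if P t then Some (g t) else None)) xs)) = f ` set xs \<union> g ` {t \<in> set xs. P t}"
  by (induction xs) auto

lemma distinct_cat_verts_map:
  "distinct xs \<Longrightarrow> inj_on f (set xs) \<Longrightarrow> inj_on g {t \<in> set xs. P t} \<Longrightarrow>
   f ` set xs \<inter> g ` {t \<in> set xs. P t} = {} \<Longrightarrow>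
   distinct (cat_verts (map (\<lambda>t. (f t, if P t then Some (g t) else None)) xs))"
proof (induction xs)
  case (Cons x xs)
  have "distinct (cat_verts (map (\<lambda>t. (f t, if P t then Some (g t) else None)) xs))"
    using Cons by (intro Cons.IH) (auto intro: inj_on_subset)
  moreover have "f x \<notin> f ` set xs \<union> g ` {t \<in> set xs. P t}" using Cons.prems by (auto simp: inj_on_def)
  moreover have "P x \<Longrightarrow> g x \<notin> f ` set xs \<union> g ` {t \<in> set xs. P t} \<and> f x \<noteq> g x"
    using Cons.prems by (auto simp: inj_on_def)
  ultimately show ?case by (simp add: set_cat_verts_map)
qed simp

lemma cat_edges_consecutive: "Suc i < length bs \<Longrightarrow> {fst (bs ! i), fst (bs ! Suc i)} \<in> cat_edges bs"
  by (induction bs arbitrary: i rule: cat_verts.induct) (auto simp: hd_conv_nth nth_Cons split: nat.splits)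

lemma cat_edges_leaf: "(w, Some x) \<in> set bs \<Longrightarrow> {w, x} \<in> cat_edges bs"
  by (induction bs rule: cat_verts.induct) auto

section \<open>Lower bound for spiked cycles\<close>

lemma rotate_mod_inverse:
  assumes "j < (l::nat)" "t < l"
  shows "((j + 1 + t) mod l + (l - j - 1)) mod l = t"
proof -
  have "((j + 1 + t) mod l + (l - j - 1)) mod l = (j + 1 + t + (l - j - 1)) mod l"
    by (metis mod_add_left_eq)
  also have "j + 1 + t + (l - j - 1) = t + l" using assms by simp
  finally show ?thesis using assms by simp
qed

lemma rotate_mod_hits:
  assumes "j < (l::nat)" "i < l" "i \<noteq> j"
  shows "\<exists>t < l - 1. (j + 1 + t) mod l = i"
proof -
  let ?t = "(i + l - j - 1) mod l"
  have "(j + 1 + ?t) mod l = (j + 1 + (i + l - j - 1)) mod l" by (metis mod_add_right_eq)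
  also have "j + 1 + (i + l - j - 1) = i + l" using assms by simp
  finally have eq: "(j + 1 + ?t) mod l = i" using assms by simp
  moreover have "?t \<noteq> l - 1"
  proof
    assume "?t = l - 1"
    hence "(j + 1 + ?t) mod l = j" using assms by simp
    thus False using eq assms by simp
  qed
  moreover have "?t < l" using assms by simp
  ultimately show ?thesis by (intro exI[of _ ?t]) simp
qed

lemma bij_betw_rotate:
  assumes "j < (l::nat)"
  shows "bij_betw (\<lambda>t. (j + 1 + t) mod l) {..<l - 1} ({..<l} - {j})"
proof -
  have "(j + 1 + t) mod l \<noteq> j" if "t < l - 1" for t
  proof (cases "j + 1 + t < l")
    case False
    hence "(j + 1 + t) mod l = j + 1 + t - l" using that assms by (simp add: le_mod_geq)
    moreover have "j + 1 + t - l < j" using that False by linarith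
    ultimately show ?thesis by simp
  qed simp
  hence "(\<lambda>t. (j + 1 + t) mod l) ` {..<l - 1} = {..<l} - {j}"
    using assms rotate_mod_hits[OF assms] by auto
  moreover have "inj_on (\<lambda>t. (j + 1 + t) mod l) {..<l - 1}"
  proof (rule inj_onI)
    fix s t assume "s \<in> {..<l - 1}" "t \<in> {..<l - 1}" "(j + 1 + s) mod l = (j + 1 + t) mod l"
    thus "s = t" using rotate_mod_inverse[OF assms, of s] rotate_mod_inverse[OF assms, of t] by simp
  qed
  ultimately show ?thesis by (simp add: bij_betw_def)
qed

context spiked_cycle
begin

text \<open>Deleting the rim vertex \<open>u\<^sub>j\<close> and the spikes outside \<open>J\<close> leaves the caterpillar with spine
  \<open>u\<^sub>j\<^sub>+\<^sub>1 \<dots> u\<^sub>j\<^sub>-\<^sub>1\<close>, plus the isolated spike of \<open>u\<^sub>j\<close> if \<open>j \<in> J\<close>.\<close>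

definition rim_caterpillar :: "nat \<Rightarrow> nat set \<Rightarrow> ('a \<times> 'a option) list" where
  "rim_caterpillar j J = map (\<lambda>t. (us ! ((j + 1 + t) mod L),
     if (j + 1 + t) mod L \<in> J then Some (sp ((j + 1 + t) mod L)) else None)) [0..<L - 1]"

context
  fixes j J assumes j: "j < L" and J: "J \<subseteq> I"
begin

private abbreviation rot :: "nat \<Rightarrow> nat" where "rot t \<equiv> (j + 1 + t) mod L"

private lemma rot_bij: "bij_betw rot {..<L - 1} ({..<L} - {j})"
  by (rule bij_betw_rotate[OF j])

private lemma rot_Suc: "rot (Suc t) = Suc (rot t) mod L"
  by (simp add: mod_Suc_eq)

private lemma rot_spikes: "rot ` {t \<in> {..<L - 1}. rot t \<in> J} = J - {j}"
proof -
  have "rot ` {t \<in> {..<L - 1}. rot t \<in> J} = rot ` {..<L - 1} \<inter> J" by blast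
  also have "\<dots> = J - {j}" using rot_bij J spikes_below by (auto simp: bij_betw_def)
  finally show ?thesis .
qed

lemma set_rim_caterpillar:
  "set (cat_verts (rim_caterpillar j J)) = (set us - {us ! j}) \<union> sp ` (J - {j})"
proof -
  have "(\<lambda>t. us ! rot t) ` {..<L - 1} = (!) us ` ({..<L} - {j})"
    using rot_bij by (metis bij_betw_def image_image)
  also have "\<dots> = set us - {us ! j}"
    using nth_eq_iff j by (auto simp: in_set_conv_nth)
  finally have rim: "(\<lambda>t. us ! rot t) ` {..<L - 1} = set us - {us ! j}" .
  have "(\<lambda>t. sp (rot t)) ` {t \<in> {..<L - 1}. rot t \<in> J} = sp ` (J - {j})"
    using rot_spikes by (metis image_image)
  thus ?thesis
    unfolding rim_caterpillar_def set_cat_verts_map[of "\<lambda>t. us ! rot t" "\<lambda>t. rot t \<in> J" "\<lambda>t. sp (rot t)"]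
    using rim by (simp add: atLeast0LessThan)
qed

lemma distinct_rim_caterpillar: "distinct (cat_verts (rim_caterpillar j J))"
  unfolding rim_caterpillar_def
proof (rule distinct_cat_verts_map[of _ "\<lambda>t. us ! rot t" "\<lambda>t. sp (rot t)" "\<lambda>t. rot t \<in> J"])
  have inj: "inj_on rot {..<L - 1}" using rot_bij by (simp add: bij_betw_def)
  show "inj_on (\<lambda>t. us ! rot t) (set [0..<L - 1])"
  proof (rule inj_onI)
    fix s t assume "s \<in> set [0..<L - 1]" "t \<in> set [0..<L - 1]" "us ! rot s = us ! rot t"
    moreover have "rot s < L" "rot t < L" using L_pos by simp_all
    ultimately show "s = t" using inj nth_eq_iff by (auto simp: inj_on_def)
  qed
  show "inj_on (\<lambda>t. sp (rot t)) {t \<in> set [0..<L - 1]. rot t \<in> J}"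
  proof (rule inj_onI)
    fix s t assume "s \<in> {t \<in> set [0..<L - 1]. rot t \<in> J}" "t \<in> {t \<in> set [0..<L - 1]. rot t \<in> J}"
      and "sp (rot s) = sp (rot t)"
    thus "s = t" using inj J sp_eq_iff[of "rot s" "rot t"] by (auto simp: inj_on_def)
  qed
  show "(\<lambda>t. us ! rot t) ` set [0..<L - 1] \<inter> (\<lambda>t. sp (rot t)) ` {t \<in> set [0..<L - 1]. rot t \<in> J} = {}"
  proof (intro equals0I)
    fix z assume "z \<in> (\<lambda>t. us ! rot t) ` set [0..<L - 1] \<inter> (\<lambda>t. sp (rot t)) ` {t \<in> set [0..<L - 1]. rot t \<in> J}"
    then obtain s t where "z = us ! rot s" "z = sp (rot t)" "rot t \<in> J" by blast
    thus False using nth_neq_spike[of "rot s" "rot t"] L_pos J by auto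
  qed
qed simp

private lemma rot_hits: "i < L \<Longrightarrow> i \<noteq> j \<Longrightarrow> \<exists>t < L - 1. rot t = i"
  by (rule rotate_mod_hits[OF j])

private lemma nth_rim_caterpillar:
  "t < L - 1 \<Longrightarrow> rim_caterpillar j J ! t = (us ! rot t, if rot t \<in> J then Some (sp (rot t)) else None)"
  by (simp add: rim_caterpillar_def)

lemma rim_edge_in_rim_caterpillar:
  assumes i: "i < L" "i \<noteq> j" "Suc i mod L \<noteq> j"
  shows "{us ! i, us ! (Suc i mod L)} \<in> cat_edges (rim_caterpillar j J)"
proof -
  obtain t where t: "t < L - 1" "rot t = i" using rot_hits i by blast
  have "Suc t < L - 1"
  proof (rule ccontr)
    assume "\<not> Suc t < L - 1"
    hence "j + 1 + Suc t = j + L" using t L_pos by simp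
    hence "rot (Suc t) = (j + L) mod L" by (simp only:)
    hence "Suc i mod L = j" using j rot_Suc[of t] t(2) by simp
    thus False using i(3) by simp
  qed
  hence "{fst (rim_caterpillar j J ! t), fst (rim_caterpillar j J ! Suc t)} \<in> cat_edges (rim_caterpillar j J)"
    by (intro cat_edges_consecutive) (simp add: rim_caterpillar_def)
  thus ?thesis using nth_rim_caterpillar t \<open>Suc t < L - 1\<close> rot_Suc by simp
qed

lemma spike_edge_in_rim_caterpillar:
  assumes i: "i \<in> J - {j}"
  shows "{us ! i, sp i} \<in> cat_edges (rim_caterpillar j J)"
proof -
  obtain t where t: "t < L - 1" "rot t = i" using rot_hits spike_below i J by blast
  hence "rim_caterpillar j J ! t = (us ! i, Some (sp i))" using nth_rim_caterpillar i by simp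
  moreover have "t < length (rim_caterpillar j J)" using t(1) by (simp add: rim_caterpillar_def)
  ultimately have "(us ! i, Some (sp i)) \<in> set (rim_caterpillar j J)" by (metis nth_mem)
  thus ?thesis by (rule cat_edges_leaf)
qed

lemma cat_induced_rim_caterpillar: "cat_induced E (rim_caterpillar j J)"
  unfolding cat_induced_def set_rim_caterpillar
proof (intro ballI impI)
  fix p q assume p: "p \<in> (set us - {us ! j}) \<union> sp ` (J - {j})"
    and q: "q \<in> (set us - {us ! j}) \<union> sp ` (J - {j})" and pq: "adj E p q"
  from pq[unfolded adj_iff] show "{p, q} \<in> cat_edges (rim_caterpillar j J)"
  proof
    assume "\<exists>i<L. {p, q} = {us ! i, us ! (Suc i mod L)}"
    then obtain i where i: "i < L" "{p, q} = {us ! i, us ! (Suc i mod L)}" by blast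
    have "k \<noteq> j" if "k < L" "us ! k \<in> {p, q}" for k
      using that p q nth_neq_spike J by auto
    hence "i \<noteq> j" "Suc i mod L \<noteq> j" using i Suc_mod_L by blast+
    thus ?thesis using rim_edge_in_rim_caterpillar i by simp
  next
    assume "\<exists>i\<in>I. {p, q} = {us ! i, sp i}"
    then obtain i where i: "i \<in> I" "{p, q} = {us ! i, sp i}" by blast
    have "sp i \<in> {p, q}" using i(2) by blast
    hence "sp i \<in> sp ` (J - {j})" using i(1) p q spike_notin by blast
    hence "i \<in> J - {j}" using sp_eq_iff i(1) J by auto
    thus ?thesis using spike_edge_in_rim_caterpillar i(2) by simp
  qed
qed

end

lemma card_rim_caterpillar_verts:
  assumes j: "j < L" and J: "J \<subseteq> I"
  shows "length (cat_verts (rim_caterpillar j J)) = (L - 1) + card (J - {j})"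
proof -
  have "card (set us - {us ! j}) = L - 1" using distinct_card[OF distinct_us] j by simp
  moreover have "card (sp ` (J - {j})) = card (J - {j})"
    using inj_sp J by (intro card_image) (auto intro: inj_on_subset)
  moreover have "(set us - {us ! j}) \<inter> sp ` (J - {j}) = {}" using spike_notin J by auto
  moreover have "finite (sp ` (J - {j}))" using J finite_I by (auto intro: finite_subset)
  ultimately show ?thesis
    using distinct_card[OF distinct_rim_caterpillar[OF j J]] set_rim_caterpillar[OF j J]
    by (simp add: card_Un_disjoint)
qed

lemma dissociated_insert_spike:
  assumes i: "i \<in> I" and D: "dissociated E D" "us ! i \<notin> D"
  shows "dissociated E (insert (sp i) D)"
proof -
  have "\<not> adj E (sp i) (sp i)" using nbr_of_spike[OF i] nth_neq_spike[OF spike_below[OF i] i] by metis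
  moreover have "\<not> adj E a (sp i)" if a: "a \<in> D" for a
  proof
    assume "adj E a (sp i)"
    hence "a = us ! i" using nbr_of_spike[OF i] adj_commute by metis
    thus False using a D(2) by blast
  qed
  ultimately show ?thesis using dissociated_Un[OF D(1) dissociated_singleton] by (simp add: Un_commute)
qed

lemma dissociation_set_avoiding:
  assumes j: "j < L" and J: "J \<subseteq> I"
  shows "\<exists>D. dissociation_set V E D \<and> us ! j \<notin> D \<and> (\<forall>i\<in>I - J. sp i \<notin> D) \<and>
     2 * ((L - 1) + card (J - {j})) + 3 * (if j \<in> J then 1 else 0) \<le> 3 * card D"
proof -
  let ?W = "(set us - {us ! j}) \<union> sp ` (J - {j})"
  obtain D0 where D0: "D0 \<subseteq> ?W" "dissociated E D0"
      "2 * ((L - 1) + card (J - {j})) \<le> 3 * card D0"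
    using caterpillar_dissociation[OF distinct_rim_caterpillar[OF j J] cat_induced_rim_caterpillar[OF j J]]
      set_rim_caterpillar[OF j J] card_rim_caterpillar_verts[OF j J] by auto
  define D where "D = D0 \<union> (if j \<in> J then {sp j} else {})"
  have uj: "us ! j \<notin> ?W" using nth_neq_spike[OF j] J by auto
  have spj: "sp j \<notin> D0" if jJ: "j \<in> J"
  proof
    assume "sp j \<in> D0"
    hence "sp j \<in> sp ` (J - {j})" using D0(1) jJ J spike_notin by blast
    then obtain i where "i \<in> J - {j}" "sp j = sp i" by blast
    thus False using sp_eq_iff[of j i] jJ J by auto
  qed
  have "finite D0" using D0(1) J finite_I by (auto intro: finite_subset)
  hence "card D = card D0 + (if j \<in> J then 1 else 0)" using spj by (simp add: D_def)
  moreover have "dissociated E D"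
    using dissociated_insert_spike[OF _ D0(2), of j] D0(1,2) uj J by (auto simp: D_def)
  moreover have "D \<subseteq> V" using D0(1) J V_eq by (auto simp: D_def)
  moreover have "us ! j \<notin> D" using D0(1) uj nth_neq_spike[OF j] J by (auto simp: D_def)
  moreover have "sp i \<notin> D" if i: "i \<in> I - J" for i
  proof
    assume "sp i \<in> D"
    then obtain i' where "i' \<in> J" "sp i = sp i'" using D0(1) i spike_notin by (auto simp: D_def split: if_splits)
    thus False using sp_eq_iff[of i i'] i J by auto
  qed
  ultimately show ?thesis
    using D0(3) by (intro exI[of _ D]) (auto simp: dissociation_set_iff)
qed

end

section \<open>Upper bounds for spiked cycles\<close>

lemma sum_lessThan_rotate_Suc:
  assumes "0 < (l::nat)"
  shows "(\<Sum>y<l. f (Suc y mod l)) = (\<Sum>y<l. f y)"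
proof -
  obtain n where n: "l = Suc n" using assms by (cases l) auto
  have "(\<Sum>y<Suc n. f (Suc y mod Suc n)) = (\<Sum>y<n. f (Suc y mod Suc n)) + f (Suc n mod Suc n)"
    by (rule sum.lessThan_Suc)
  also have "(\<Sum>y<n. f (Suc y mod Suc n)) = (\<Sum>y<n. f (Suc y))" by (intro sum.cong) auto
  also have "(\<Sum>y<n. f (Suc y)) + f (Suc n mod Suc n) = (\<Sum>y<Suc n. f y)"
    by (subst sum.lessThan_Suc_shift) (simp add: add.commute)
  finally show ?thesis using n by simp
qed

lemma sum_lessThan_rotate:
  assumes "0 < (l::nat)"
  shows "(\<Sum>y<l. f ((y + i) mod l)) = (\<Sum>y<l. f y)"
proof (induction i)
  case (Suc i)
  have "(\<Sum>y<l. f ((y + Suc i) mod l)) = (\<Sum>y<l. (\<lambda>z. f ((z + i) mod l)) (Suc y mod l))"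
    by (intro sum.cong) (auto simp: mod_add_left_eq)
  also have "\<dots> = (\<Sum>y<l. f ((y + i) mod l))" by (rule sum_lessThan_rotate_Suc[OF assms])
  finally show ?case using Suc by simp
qed (intro sum.cong, auto)

definition gap :: "'a list \<Rightarrow> 'a set \<Rightarrow> nat \<Rightarrow> nat" where
  "gap us D x = (if us ! (x mod length us) \<in> D then 0 else 1)"

definition window :: "'a list \<Rightarrow> 'a set \<Rightarrow> nat \<Rightarrow> nat" where
  "window us D y = gap us D y + gap us D (y + 1) + gap us D (y + 2)"

lemma gap_add_length: "gap us D (x + length us) = gap us D x"
  by (simp add: gap_def)

lemma gap_mod_add: "gap us D (x mod length us + i) = gap us D (x + i)"
  unfolding gap_def by (simp add: mod_add_left_eq)

lemma window_mod: "window us D (x mod length us) = window us D x"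
  unfolding window_def gap_mod_add by (simp add: gap_def)

lemma window_periodic: "window us D y = 1 \<Longrightarrow> window us D (Suc y) = 1 \<Longrightarrow> gap us D (y + 3) = gap us D y"
  unfolding window_def by (simp add: numeral_3_eq_3 numeral_2_eq_2)

lemma sum_gap:
  assumes "0 < length us"
  shows "(\<Sum>y<length us. gap us D (y + i)) = card {j. j < length us \<and> us ! j \<notin> D}"
proof -
  have "(\<Sum>y<length us. gap us D (y + i)) = (\<Sum>y<length us. gap us D ((y + i) mod length us))"
    by (simp add: gap_def)
  also have "\<dots> = (\<Sum>y<length us. gap us D y)" by (rule sum_lessThan_rotate[OF assms])
  also have "\<dots> = (\<Sum>y \<in> {j. j < length us \<and> us ! j \<notin> D}. 1)"
    by (rule sum.mono_neutral_cong_right) (auto simp: gap_def)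
  finally show ?thesis by simp
qed

lemma sum_window:
  "0 < length us \<Longrightarrow> (\<Sum>y<length us. window us D y) = 3 * card {j. j < length us \<and> us ! j \<notin> D}"
  using sum_gap[of us D 0] sum_gap[of us D 1] sum_gap[of us D 2]
  by (simp add: window_def sum.distrib)

lemma card_nth_set:
  assumes "distinct us" "D \<subseteq> set us"
  shows "card D = card {j. j < length us \<and> us ! j \<in> D}"
proof -
  have "D = (!) us ` {j. j < length us \<and> us ! j \<in> D}"
  proof
    show "D \<subseteq> (!) us ` {j. j < length us \<and> us ! j \<in> D}"
    proof
      fix x assume x: "x \<in> D"
      then obtain j where "j < length us" "us ! j = x" using assms(2) by (metis in_set_conv_nth subsetD)
      thus "x \<in> (!) us ` {j. j < length us \<and> us ! j \<in> D}" using x by auto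
    qed
  qed auto
  moreover have "inj_on ((!) us) {j. j < length us \<and> us ! j \<in> D}"
    using assms(1) by (auto simp: inj_on_def nth_eq_iff_index_eq)
  ultimately show ?thesis by (metis card_image)
qed

lemma card_split_nth: "card {j. j < (l::nat) \<and> P j} + card {j. j < l \<and> \<not> P j} = l"
proof -
  have "{j. j < l \<and> P j} \<union> {j. j < l \<and> \<not> P j} = {..<l}" by auto
  moreover have "{j. j < l \<and> P j} \<inter> {j. j < l \<and> \<not> P j} = {}" by auto
  ultimately show ?thesis by (metis card_Un_disjoint card_lessThan finite_Collect_conjI finite_Collect_less_nat)
qed

lemma mod_neq_if_close: "(x::nat) < y \<Longrightarrow> y < x + l \<Longrightarrow> x mod l \<noteq> y mod l"
proof
  assume a: "x < y" "y < x + l" "x mod l = y mod l"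
  hence "l dvd (y - x)" using mod_eq_dvd_iff_nat[of x y l] by simp
  moreover have "0 < y - x" "y - x < l" using a by auto
  ultimately show False by (meson nat_dvd_not_less)
qed

lemma gap_periodic_run:
  assumes ones: "\<And>t. t < n \<Longrightarrow> window us D (y + t) = 1" and s: "r + 3 * s < n + 2"
  shows "gap us D (y + r + 3 * s) = gap us D (y + r)"
  using s
proof (induction s)
  case (Suc s)
  have "window us D (y + (r + 3 * s)) = 1" "window us D (Suc (y + (r + 3 * s))) = 1"
    using ones[of "r + 3 * s"] ones[of "Suc (r + 3 * s)"] Suc.prems by simp_all
  hence "gap us D (y + r + 3 * s + 3) = gap us D (y + r + 3 * s)"
    using window_periodic by (metis add.assoc)
  thus ?case using Suc by (simp add: algebra_simps)
qed simp

context spiked_cycle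
begin

lemma window_ge_1:
  assumes ds: "dissociation_set V E D"
  shows "1 \<le> window us D y"
proof (rule ccontr)
  let ?m = "(y + 1) mod L"
  assume "\<not> 1 \<le> window us D y"
  hence "us ! (y mod L) \<in> D" "us ! ?m \<in> D" "us ! ((y + 2) mod L) \<in> D"
    by (auto simp: window_def gap_def split: if_splits)
  moreover have "adj E (us ! ?m) (us ! ((y + 2) mod L))"
    using adj_next[of ?m] L_pos by (simp add: mod_Suc_eq)
  moreover have "adj E (us ! ?m) (us ! (y mod L))"
    using adj_prev[of ?m] L_pos Suc_mod_eq_imp_pred[of "y mod L" L ?m] by (simp add: mod_Suc_eq)
  moreover have "(y + 2) mod L \<noteq> y mod L"
    using add_2_mod_neq[of "y mod L" L] L_pos length_ge_3 by (metis mod_add_left_eq mod_less_divisor)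
  hence "us ! ((y + 2) mod L) \<noteq> us ! (y mod L)" using nth_eq_iff L_pos by simp
  ultimately show False
    using dissociation_set_no_two_nbrs[OF ds dissociation_set_finite[OF finite_V ds]] by blast
qed

lemma gaps_around_spike:
  assumes ds: "dissociation_set V E D" and s: "s \<in> I" "sp s \<in> D" "us ! s \<in> D"
  shows "gap us D (s + L - 1) = 1" "gap us D (s + 1) = 1"
proof -
  have sl: "s < L" using spike_below[OF s(1)] .
  note two = dissociation_set_no_two_nbrs[OF ds dissociation_set_finite[OF finite_V ds] s(3) _ _ s(2) _ adj_spike[OF s(1)]]
  have "us ! ((s + L - 1) mod L) \<notin> D"
    using two[OF nth_neq_spike[OF _ s(1)] _ adj_prev[OF sl]] L_pos by auto
  thus "gap us D (s + L - 1) = 1" by (simp add: gap_def)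
  have "us ! (Suc s mod L) \<notin> D"
    using two[OF nth_neq_spike[OF _ s(1)] _ adj_next[OF sl]] Suc_mod_L by auto
  thus "gap us D (s + 1) = 1" by (simp add: gap_def)
qed

lemma window_ge_2_at_spike:
  assumes ds: "dissociation_set V E D" and p: "p \<in> I" "sp p \<in> D" "us ! p \<in> D"
  shows "2 \<le> window us D (p + L - 1)"
proof -
  have "gap us D (p + L - 1) = 1" "gap us D (p + 1 + L) = 1"
    using gaps_around_spike[OF ds p] gap_add_length[of us D "p + 1"] by simp_all
  moreover have "p + L - 1 + 1 = p + L" "p + L - 1 + 2 = p + 1 + L" using L_pos by simp_all
  ultimately show ?thesis unfolding window_def by simp
qed

text \<open>If all windows between two spikes \<open>p < q\<close> with \<open>q - p \<equiv> 2 (mod 3)\<close> contained a single gap,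
  the gap pattern would be 3-periodic there, which is incompatible with the spike at \<open>q\<close>.\<close>

lemma window_ge_2_between_spikes:
  assumes ds: "dissociation_set V E D" and spikes: "sp ` I \<subseteq> D"
    and p: "p \<in> I" and q: "q \<in> I" and pq: "p < q" and mod3: "(q - p) mod 3 = 2"
  shows "\<exists>t < q - p. 2 \<le> window us D (p + L - 1 + t)"
proof -
  let ?y = "p + L - 1"
  let ?g = "gap us D"
  have ql: "q < L" using spike_below[OF q] .
  obtain m where m: "q - p = 3 * m + 2" using mod3 by (metis div_mod_decomp add.commute mult.commute)
  show ?thesis
  proof (cases "us ! p \<in> D")
    case True
    have "sp p \<in> D" using spikes p by blast
    hence "2 \<le> window us D (?y + 0)" using window_ge_2_at_spike[OF ds p _ True] by simp
    thus ?thesis using pq by (intro exI[of _ 0]) simp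
  next
    case False
    hence gp: "?g (?y + 1) = 1" using L_pos gap_add_length[of us D p] pq ql by (simp add: gap_def)
    show ?thesis
    proof (rule ccontr)
      assume "\<not> ?thesis"
      hence ones: "t < q - p \<Longrightarrow> window us D (?y + t) = 1" for t
        using window_ge_1[OF ds, of "?y + t"] by fastforce
      have "window us D (?y + 0) = 1" using ones[of 0] pq by simp
      hence g2: "?g (?y + 2) = 0" using gp unfolding window_def by simp
      have "1 + 3 * m < q - p + 2" "2 + 3 * m < q - p + 2" using m by simp_all
      hence "?g (?y + 1 + 3 * m) = ?g (?y + 1)" "?g (?y + 2 + 3 * m) = ?g (?y + 2)"
        using gap_periodic_run[where n = "q - p", OF ones] by blast+
      hence A: "?g (?y + 1 + 3 * m) = 1" and B: "?g (?y + 2 + 3 * m) = 0"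
        using gp g2 by simp_all
      have qy: "?y + 2 + 3 * m = q + L - 1" using m pq L_pos by simp
      show False
      proof (cases "us ! q \<in> D")
        case True
        thus False using gaps_around_spike(1)[OF ds q _ True] spikes q B qy by auto
      next
        case False
        hence "?g (?y + 3 + 3 * m) = 1"
          using qy ql L_pos gap_add_length[of us D q] by (simp add: gap_def)
        moreover have "window us D (?y + (3 * m + 1)) = 1" using ones[of "3 * m + 1"] m by simp
        moreover have "window us D (?y + (3 * m + 1)) =
            ?g (?y + 1 + 3 * m) + ?g (?y + 2 + 3 * m) + ?g (?y + 3 + 3 * m)"
          unfolding window_def by (simp add: algebra_simps numeral_3_eq_3)
        ultimately show False using A B by simp
      qed
    qed
  qed
qed

text \<open>Replacing \<open>u\<^sub>i\<close> by its spike whenever the spike is missing keeps a set dissociated and does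
  not shrink it.\<close>

lemma dissociated_spike_swap:
  assumes ds: "dissociation_set V E D"
  shows "dissociated E ((D - (!) us ` {i \<in> I. sp i \<notin> D}) \<union> sp ` I)"
    (is "dissociated E ?D'")
  unfolding dissociated_def
proof
  fix z assume z: "z \<in> ?D'"
  show "card {y \<in> ?D'. adj E z y} \<le> 1"
  proof (cases "z \<in> sp ` I")
    case True
    then obtain i where i: "i \<in> I" "z = sp i" by blast
    have "{y \<in> ?D'. adj E z y} \<subseteq> {us ! i}" using nbr_of_spike[OF i(1)] i(2) by auto
    hence "card {y \<in> ?D'. adj E z y} \<le> card {us ! i}" by (intro card_mono) auto
    thus ?thesis by simp
  next
    case False
    hence zD: "z \<in> D - (!) us ` {i \<in> I. sp i \<notin> D}" using z by blast
    have "{y \<in> ?D'. adj E z y} \<subseteq> {y \<in> D. adj E z y}"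
    proof
      fix y assume y: "y \<in> {y \<in> ?D'. adj E z y}"
      show "y \<in> {y \<in> D. adj E z y}"
      proof (cases "y \<in> D")
        case False
        then obtain i where i: "i \<in> I" "y = sp i" "sp i \<notin> D" using y by auto
        moreover have "z = us ! i" using nbr_of_spike[OF i(1)] y i(2) adj_commute by fastforce
        ultimately show ?thesis using zD by auto
      qed (use y in simp)
    qed
    hence "card {y \<in> ?D'. adj E z y} \<le> card {y \<in> D. adj E z y}"
      using dissociation_set_finite[OF finite_V ds] by (intro card_mono) auto
    also have "\<dots> \<le> 1" using ds zD by (auto simp: dissociation_set_def)
    finally show ?thesis .
  qed
qed

lemma ex_dissociation_set_with_spikes:
  assumes ds: "dissociation_set V E D"
  shows "\<exists>D'. dissociation_set V E D' \<and> card D \<le> card D' \<and> sp ` I \<subseteq> D'"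
proof -
  define R where "R = {i \<in> I. sp i \<notin> D}"
  define D' where "D' = (D - (!) us ` R) \<union> sp ` I"
  have finD: "finite D" using dissociation_set_finite[OF finite_V ds] .
  have finR: "finite R" using finite_I by (simp add: R_def)
  have D'V: "D' \<subseteq> V" using ds V_eq by (auto simp: D'_def dissociation_set_def)
  have "card D \<le> card ((D - (!) us ` R) \<union> (!) us ` R)" using finD finR by (intro card_mono) auto
  also have "\<dots> \<le> card (D - (!) us ` R) + card ((!) us ` R)" by (rule card_Un_le)
  also have "card ((!) us ` R) \<le> card R" using finR by (rule card_image_le)
  also have "card R = card (sp ` R)"
    using inj_sp by (intro card_image[symmetric]) (auto simp: R_def intro: inj_on_subset)
  also have "card (D - (!) us ` R) + card (sp ` R) = card ((D - (!) us ` R) \<union> sp ` R)"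
    using finD finR by (intro card_Un_disjoint[symmetric]) (auto simp: R_def)
  also have "\<dots> \<le> card D'"
    using D'V finite_V by (intro card_mono) (auto simp: D'_def R_def intro: finite_subset)
  finally have "card D \<le> card D'" by simp
  thus ?thesis using D'V dissociated_spike_swap[OF ds] unfolding dissociation_set_iff
    by (intro exI[of _ D']) (auto simp: D'_def R_def)
qed

lemma rim_card_le:
  assumes ds: "dissociation_set V E D"
  shows "3 * card {j. j < L \<and> us ! j \<in> D} \<le> 2 * L"
proof -
  have "L \<le> (\<Sum>y<L. window us D y)"
    using sum_mono[of "{..<L}" "\<lambda>_. 1::nat" "window us D"] window_ge_1[OF ds] by simp
  hence "L \<le> 3 * card {j. j < L \<and> us ! j \<notin> D}" using sum_window[OF L_pos] by simp
  thus ?thesis using card_split_nth[of L "\<lambda>j. us ! j \<in> D"] by simp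
qed

end

lemma mod3_wrap_telescope:
  fixes l a b k :: nat
  assumes "(l + a - b) mod 3 = 1" "(b - a) mod 3 = (2 * (k - 1)) mod 3" "a \<le> b" "b < l" "2 \<le> k"
  shows "(l + k) mod 3 = 2"
proof -
  have arith: "(e::nat) mod 3 = 1 \<Longrightarrow> d mod 3 = (2 * k' + 2) mod 3 \<Longrightarrow> (e + d + (k' + 2)) mod 3 = 2"
    for e d k' by presburger
  obtain k' where k: "k = k' + 2" using assms(5) by (metis add.commute le_Suc_ex)
  have "(l - (b - a)) mod 3 = 1" "(b - a) mod 3 = (2 * k' + 2) mod 3"
    using assms(1,2,3) k by (simp_all add: algebra_simps)
  hence "((l - (b - a)) + (b - a) + (k' + 2)) mod 3 = 2" by (rule arith)
  thus ?thesis using assms(3,4) k by simp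
qed

text \<open>The gaps between consecutive spikes telescope to \<open>l \<equiv> 1 + 2 (k - 1)\<close>, i.e. \<open>l + k \<equiv> 2 (mod 3)\<close>.\<close>

lemma very_good_spikes_facts:
  assumes vg: "very_good_spikes l I" and fin: "finite I" and below: "I \<subseteq> {..<l}"
  shows "2 \<le> card I" and "(l + card I) mod 3 = 2"
    and "\<And>j. j + 1 < card I \<Longrightarrow>
      (sorted_list_of_set I ! (j + 1) - sorted_list_of_set I ! j) mod 3 = 2"
proof -
  let ?is = "sorted_list_of_set I"
  let ?k = "card I"
  have len: "length ?is = ?k" using fin by simp
  have "l mod 3 \<noteq> 1" using vg by (simp add: very_good_spikes_def)
  hence k2: "2 \<le> ?k" and dif: "\<And>j. j + 1 < ?k \<Longrightarrow> (?is ! (j + 1) - ?is ! j) mod 3 = 2"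
    and wrap: "(l + ?is ! 0 - ?is ! (?k - 1)) mod 3 = 1"
    using vg len unfolding very_good_spikes_def good_spikes_def Let_def by auto
  thus "2 \<le> ?k" "\<And>j. j + 1 < ?k \<Longrightarrow> (?is ! (j + 1) - ?is ! j) mod 3 = 2" by auto
  have "sorted_wrt (<) ?is" by simp
  hence mono: "a \<le> b \<Longrightarrow> b < ?k \<Longrightarrow> ?is ! a \<le> ?is ! b" for a b
    using len by (metis le_less sorted_wrt_nth_less)
  have tel: "(?is ! m - ?is ! 0) mod 3 = (2 * m) mod 3" if "m < ?k" for m
    using that
  proof (induction m)
    case (Suc m)
    have step: "(x::nat) = a + b \<Longrightarrow> a mod 3 = 2 \<Longrightarrow> b mod 3 = (2 * n) mod 3 \<Longrightarrow>
        x mod 3 = (2 * Suc n) mod 3" for x a b n by presburger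
    have "?is ! Suc m - ?is ! 0 = (?is ! Suc m - ?is ! m) + (?is ! m - ?is ! 0)"
      using mono[of 0 m] mono[of m "Suc m"] Suc.prems by simp
    moreover have "(?is ! Suc m - ?is ! m) mod 3 = 2" using dif[of m] Suc.prems by simp
    moreover have "(?is ! m - ?is ! 0) mod 3 = (2 * m) mod 3" using Suc by simp
    ultimately show ?case by (rule step)
  qed simp
  have "?is ! (?k - 1) \<in> set ?is" using len k2 by (intro nth_mem) simp
  hence last: "?is ! (?k - 1) < l" using below fin by auto
  have "?is ! 0 \<le> ?is ! (?k - 1)" using mono k2 by simp
  thus "(l + ?k) mod 3 = 2" using mod3_wrap_telescope[OF wrap _ _ last k2] tel[of "?k - 1"] k2 by simp
qed

lemma card_bound_2mod3:
  fixes x r n :: nat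
  assumes "n \<le> 3 * r + 1" "x + r = n" "n mod 3 = 2"
  shows "3 * x + 1 \<le> 2 * n"
proof -
  have "3 * x \<le> 2 * n + 1" using assms(1,2) by linarith
  thus ?thesis using assms(3) by presburger
qed

context spiked_cycle
begin

lemma card_windows_ge_2:
  assumes vg: "very_good_spikes L I" and ds: "dissociation_set V E D" and spikes: "sp ` I \<subseteq> D"
  shows "card I - 1 \<le> card {z. z < L \<and> 2 \<le> window us D z}"
proof -
  let ?is = "sorted_list_of_set I"
  let ?k = "card I"
  have len: "length ?is = ?k" using finite_I by simp
  have lt: "a < b \<Longrightarrow> b < ?k \<Longrightarrow> ?is ! a < ?is ! b" for a b
    using len sorted_wrt_nth_less[of "(<)" ?is] by simp
  have inI: "a < ?k \<Longrightarrow> ?is ! a \<in> I" for a using len finite_I by (metis nth_mem set_sorted_list_of_set)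
  have "\<exists>t. a < ?k - 1 \<longrightarrow> t < ?is ! (a + 1) - ?is ! a \<and> 2 \<le> window us D (?is ! a + L - 1 + t)"
    for a
  proof (cases "a < ?k - 1")
    case True
    hence "\<exists>t < ?is ! (a + 1) - ?is ! a. 2 \<le> window us D (?is ! a + L - 1 + t)"
      by (intro window_ge_2_between_spikes[OF ds spikes inI inI lt]
          very_good_spikes_facts(3)[OF vg finite_I spikes_below]) auto
    thus ?thesis by blast
  qed simp
  then obtain tw where tw: "\<And>a. a < ?k - 1 \<Longrightarrow>
      tw a < ?is ! (a + 1) - ?is ! a \<and> 2 \<le> window us D (?is ! a + L - 1 + tw a)"
    by metis
  define y where "y a = ?is ! a + L - 1 + tw a" for a
  have "2 \<le> window us D (y a mod L)" if "a < ?k - 1" for a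
    using tw[OF that] window_mod[of us D "y a"] unfolding y_def by simp
  hence "(\<lambda>a. y a mod L) ` {..<?k - 1} \<subseteq> {z. z < L \<and> 2 \<le> window us D z}"
    using L_pos by auto
  moreover have inj: "inj_on (\<lambda>a. y a mod L) {..<?k - 1}"
  proof -
    have ne: "y a mod L \<noteq> y b mod L" if ab: "a < b" "b < ?k - 1" for a b
    proof (rule mod_neq_if_close)
      have k: "a + 1 < ?k" "b < ?k" "b + 1 < ?k" using ab by linarith+
      have "?is ! (a + 1) \<le> ?is ! b" using lt[of "a + 1" b] k ab by (cases "a + 1 = b") auto
      moreover have "?is ! a < ?is ! (a + 1)" "?is ! b < ?is ! (b + 1)" using lt[of a "a + 1"] lt[of b "b + 1"] k by simp_all
      moreover have "tw a < ?is ! (a + 1) - ?is ! a" "tw b < ?is ! (b + 1) - ?is ! b"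
        using tw ab by simp_all
      moreover have "?is ! (b + 1) < L" using inI[of "b + 1"] spike_below k by simp
      ultimately show "y a < y b" "y b < y a + L" using L_pos unfolding y_def by linarith+
    qed
    show ?thesis
    proof (rule inj_onI)
      fix a b assume "a \<in> {..<?k - 1}" "b \<in> {..<?k - 1}" "y a mod L = y b mod L"
      thus "a = b" using ne[of a b] ne[of b a] by (cases a b rule: linorder_cases) auto
    qed
  qed
  ultimately have "card {..<?k - 1} \<le> card {z. z < L \<and> 2 \<le> window us D z}"
    by (intro card_inj_on_le) (auto simp: finite_nat_set_iff_bounded)
  thus ?thesis by simp
qed

lemma sum_window_ge:
  "dissociation_set V E D \<Longrightarrow> L + card {z. z < L \<and> 2 \<le> window us D z} \<le> (\<Sum>z<L. window us D z)"
proof -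
  assume ds: "dissociation_set V E D"
  have "(\<Sum>z<L. (if 2 \<le> window us D z then 1 else 0::nat)) = card ({..<L} \<inter> {z. 2 \<le> window us D z})"
    by (simp add: sum.If_cases)
  also have "{..<L} \<inter> {z. 2 \<le> window us D z} = {z. z < L \<and> 2 \<le> window us D z}" by auto
  moreover have "(\<Sum>z<L. (1::nat) + (if 2 \<le> window us D z then 1 else 0)) =
      (\<Sum>z<L. 1) + (\<Sum>z<L. (if 2 \<le> window us D z then 1 else 0))"
    by (rule sum.distrib)
  ultimately have "L + card {z. z < L \<and> 2 \<le> window us D z} =
      (\<Sum>z<L. (1::nat) + (if 2 \<le> window us D z then 1 else 0))"
    by simp
  also have "\<dots> \<le> (\<Sum>z<L. window us D z)"
    using window_ge_1[OF ds] by (intro sum_mono) (auto simp: not_le)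
  finally show ?thesis .
qed

lemma card_dissociation_set_with_spikes:
  assumes "dissociation_set V E D" "sp ` I \<subseteq> D"
  shows "card D = card {j. j < L \<and> us ! j \<in> D} + card I"
proof -
  have "D = (D \<inter> set us) \<union> sp ` I" using assms V_eq by (auto simp: dissociation_set_def)
  moreover have "{j. j < L \<and> us ! j \<in> D \<inter> set us} = {j. j < L \<and> us ! j \<in> D}" by auto
  hence "card (D \<inter> set us) = card {j. j < L \<and> us ! j \<in> D}"
    using card_nth_set[OF distinct_us, of "D \<inter> set us"] by simp
  moreover have "(D \<inter> set us) \<inter> sp ` I = {}" using spikes_disjoint by blast
  ultimately show ?thesis
    using card_Un_disjoint[of "D \<inter> set us" "sp ` I"] finite_I card_image[OF inj_sp] by simp
qed

text \<open>Counting gaps: the \<open>L\<close> windows cover every gap three times and, by \<open>card_windows_ge_2\<close>,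
  contain at least \<open>L + k - 1\<close> gaps; the congruence \<open>L + k \<equiv> 2\<close> then sharpens the bound by one.\<close>

lemma very_good_card_le:
  assumes vg: "very_good_spikes L I" and ds: "dissociation_set V E D"
  shows "3 * card D + 1 \<le> 2 * (L + card I)"
proof -
  let ?k = "card I"
  obtain D' where D': "dissociation_set V E D'" "card D \<le> card D'" "sp ` I \<subseteq> D'"
    using ex_dissociation_set_with_spikes[OF ds] by blast
  let ?r = "card {j. j < L \<and> us ! j \<notin> D'}"
  have k: "2 \<le> ?k" "(L + ?k) mod 3 = 2"
    using very_good_spikes_facts[OF vg finite_I spikes_below] by auto
  have "L + ?k \<le> 3 * ?r + 1"
    using sum_window_ge[OF D'(1)] card_windows_ge_2[OF vg D'(1,3)] sum_window[OF L_pos, of D'] k(1)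
    by linarith
  moreover have "card D' + ?r = L + ?k"
    using card_dissociation_set_with_spikes[OF D'(1,3)] card_split_nth[of L "\<lambda>j. us ! j \<in> D'"] by simp
  ultimately have "3 * card D' + 1 \<le> 2 * (L + ?k)" using k(2) by (rule card_bound_2mod3)
  thus ?thesis using D'(2) by linarith
qed

end

section \<open>The base graphs and the class \<open>\<C>\<close>\<close>

lemma div3_bounds_2mod3:
  fixes n x :: nat assumes "n mod 3 = 2"
  shows "3 * x + 1 \<le> 2 * n \<Longrightarrow> x \<le> (2 * n - 1) div 3"
    and "2 * n \<le> 3 * x + 3 \<Longrightarrow> (2 * n - 1) div 3 \<le> x"
    and "3 * ((2 * n - 1) div 3) + n + 1 = 3 * n"
  using assms by presburger+

lemma div3_bounds_not_0mod3:
  fixes l x :: nat assumes "l mod 3 \<noteq> 0"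
  shows "3 * x \<le> 2 * l \<Longrightarrow> x \<le> 2 * l div 3"
    and "2 * (l - 1) \<le> 3 * x \<Longrightarrow> 2 * l div 3 \<le> x"
    and "3 * (2 * l div 3) + l + 1 + (if l mod 3 = 1 then 1 else 0) = 3 * l"
  using assms by presburger+

lemma extremalI:
  assumes "finite V" "V \<noteq> {}" "simple_graph V E" "connected V E"
    and upper: "\<And>D. dissociation_set V E D \<Longrightarrow> card D \<le> d"
    and lower: "\<And>u. u \<in> V \<Longrightarrow> \<exists>D. dissociation_set V E D \<and> u \<notin> D \<and> d \<le> card D"
    and formula: "3 * d + card E + 1 + cycles_1mod3 V E = 3 * card V"
  shows "extremal V E"
proof -
  have max: "max_dissociation_set V E D" if "dissociation_set V E D" "d \<le> card D" for D
  proof -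
    obtain D0 where "max_dissociation_set V E D0" using ex_max_dissociation_set[OF assms(1)] by blast
    hence "diss V E \<le> d" using upper[of D0] by (simp add: max_dissociation_set_def)
    thus ?thesis using that max_dissociation_setI[OF assms(1)] by simp
  qed
  obtain u where "u \<in> V" using assms(2) by blast
  then obtain D where "dissociation_set V E D" "d \<le> card D" using lower by blast
  hence "diss V E = d" using max upper by (fastforce simp: max_dissociation_set_def)
  moreover have "avoidable V E" unfolding avoidable_def using lower max by blast
  ultimately show ?thesis using assms formula by (simp add: extremal_def)
qed

lemma induced_cycle_sets_path3:
  assumes "distinct [a, b, c]"
  shows "induced_cycle_sets {a, b, c} {{a, b}, {b, c}} = {}"
proof (rule ccontr)
  let ?V = "{a, b, c}" and ?E = "{{a, b}, {b, c}}"
  assume "induced_cycle_sets ?V ?E \<noteq> {}"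
  then obtain S vs where S: "S \<subseteq> ?V" and cyc: "is_cycle_graph vs S {e \<in> ?E. e \<subseteq> S}"
    by (auto simp: induced_cycle_sets_def)
  have "3 \<le> card S" using cyc distinct_card[of vs] by (auto simp: is_cycle_graph_def)
  moreover have "card ?V = 3" "finite ?V" using assms by auto
  ultimately have "S = ?V" using S by (metis card_seteq)
  hence "a \<in> S" by simp
  then obtain y z where "y \<noteq> z" "adj ?E a y" "adj ?E a z"
    using cycle_graph_two_nbrs[OF cyc, of ?E] by blast
  thus False using assms by (auto simp: adj_def doubleton_eq_iff)
qed

lemma extremal_P3:
  assumes "distinct [a, b, c]"
  shows "extremal {a, b, c} {{a, b}, {b, c}}"
proof -
  let ?V = "{a, b, c}" and ?E = "{{a, b}, {b, c}}"
  have ab: "a \<noteq> b" "b \<noteq> c" "a \<noteq> c" using assms by auto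
  have card_V: "card ?V = 3" using ab by simp
  have adjE: "adj ?E x y \<longleftrightarrow> {x, y} = {a, b} \<or> {x, y} = {b, c}" for x y by (simp add: adj_def)
  have no_loop: "\<not> adj ?E x x" for x using ab by (auto simp: adjE doubleton_eq_iff)
  have "card D \<le> 2" if ds: "dissociation_set ?V ?E D" for D
  proof (rule ccontr)
    assume "\<not> card D \<le> 2"
    moreover have "D \<subseteq> ?V" using ds by (simp add: dissociation_set_def)
    ultimately have "D = ?V" using card_V by (metis card_mono card_seteq finite.emptyI finite.insertI not_le
        antisym_conv2 Suc_leI numeral_2_eq_2 numeral_3_eq_3)
    thus False
      using dissociation_set_no_two_nbrs[OF ds _ _ ab(3), of b] by (auto simp: adjE insert_commute)
  qed
  moreover have "\<exists>D. dissociation_set ?V ?E D \<and> u \<notin> D \<and> 2 \<le> card D" if "u \<in> ?V" for u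
  proof -
    obtain x y where "x \<in> ?V" "y \<in> ?V" "x \<noteq> y" "u \<noteq> x" "u \<noteq> y"
      using that ab by auto
    thus ?thesis using dissociated_pair[OF no_loop no_loop]
      by (intro exI[of _ "{x, y}"]) (auto simp: dissociation_set_iff)
  qed
  moreover have "connected ?V ?E"
  proof (rule connectedI_root[of b])
    fix x assume "x \<in> ?V"
    moreover have "reach ?V ?E b a" "reach ?V ?E b c"
      by (auto intro!: reach_step simp: adjE insert_commute)
    ultimately show "reach ?V ?E b x" using reach_refl by auto
  qed simp
  moreover have "simple_graph ?V ?E" unfolding simple_graph_def using ab by blast
  moreover have "card ?E = 2" using ab by (simp add: doubleton_eq_iff)
  ultimately show ?thesis using card_V induced_cycle_sets_path3[OF assms]
    by (intro extremalI[where d = 2]) (auto simp: cycles_1mod3_def)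
qed

lemma extremal_good_cycle:
  assumes "good_cycle V E"
  shows "extremal V E"
proof -
  obtain vs where cyc: "is_cycle_graph vs V E" and mod3: "length vs mod 3 \<noteq> 0"
    using assms by (auto simp: good_cycle_def)
  interpret spiked_cycle vs "{}" undefined V E
    using cyc by unfold_locales (auto simp: is_cycle_graph_def)
  show ?thesis
  proof (rule extremalI[where d = "2 * L div 3"])
    fix D assume ds: "dissociation_set V E D"
    hence "card D = card {j. j < L \<and> vs ! j \<in> D}"
      using card_nth_set[OF distinct_us] V_eq by (simp add: dissociation_set_def)
    thus "card D \<le> 2 * L div 3" using rim_card_le[OF ds] div3_bounds_not_0mod3(1)[OF mod3] by simp
  next
    fix u assume "u \<in> V"
    then obtain j where j: "j < L" "vs ! j = u" using V_eq by (auto simp: in_set_conv_nth)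
    obtain D where "dissociation_set V E D" "vs ! j \<notin> D" "2 * (L - 1) \<le> 3 * card D"
      using dissociation_set_avoiding[OF j(1), of "{}"] by auto
    moreover note div3_bounds_not_0mod3(2)[OF mod3, of "card D"]
    ultimately show "\<exists>D. dissociation_set V E D \<and> u \<notin> D \<and> 2 * L div 3 \<le> card D" using j by blast
  next
    note div3_bounds_not_0mod3(3)[OF mod3]
    thus "3 * (2 * L div 3) + card E + 1 + cycles_1mod3 V E = 3 * card V"
      using card_V card_E cycles_1mod3 by simp
  qed (use finite_V V_eq L_pos simple_graph connected in auto)
qed

lemma (in spiked_cycle) ex_dissociation_set_avoiding_vertex:
  assumes k: "2 \<le> card I" and u: "u \<in> V"
  shows "\<exists>D. dissociation_set V E D \<and> u \<notin> D \<and> 2 * (L + card I) \<le> 3 * card D + 3"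
proof (cases "u \<in> set us")
  case True
  then obtain j where j: "j < L" "us ! j = u" by (auto simp: in_set_conv_nth)
  obtain D where "dissociation_set V E D" "us ! j \<notin> D"
    "2 * ((L - 1) + card (I - {j})) + 3 * (if j \<in> I then 1 else 0) \<le> 3 * card D"
    using dissociation_set_avoiding[OF j(1) order_refl] by blast
  moreover have "2 * ((L - 1) + card (I - {j})) + 3 * (if j \<in> I then 1 else 0) + 2 \<ge> 2 * (L + card I)"
    using finite_I k L_pos by (cases "j \<in> I") auto
  ultimately show ?thesis using j(2) by (intro exI[of _ D]) auto
next
  case False
  then obtain p where p: "p \<in> I" "u = sp p" using u V_eq by auto
  have "\<not> I \<subseteq> {p}" using k card_mono[of "{p}" I] by auto
  then obtain j where j: "j \<in> I" "j \<noteq> p" by blast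
  obtain D where "dissociation_set V E D" "sp p \<notin> D"
    "2 * ((L - 1) + card (I - {p} - {j})) + 3 \<le> 3 * card D"
    using dissociation_set_avoiding[OF spike_below[OF j(1)], of "I - {p}"] j p(1) by auto
  moreover have "card (I - {p} - {j}) = card I - 2" using finite_I j p(1) by (simp add: card_Diff_subset)
  hence "2 * ((L - 1) + card (I - {p} - {j})) + 3 + 3 \<ge> 2 * (L + card I)" using k L_pos by simp
  ultimately show ?thesis using p(2) by (intro exI[of _ D]) auto
qed

lemma extremal_very_good_spiked_cycle:
  assumes "very_good_spiked_cycle V E"
  shows "extremal V E"
proof -
  obtain us I sp where sc: "is_spiked_cycle us I sp V E" and vg: "very_good_spikes (length us) I"
    using assms by (auto simp: very_good_spiked_cycle_def)
  interpret spiked_cycle us I sp V E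
    using sc by unfold_locales (auto simp: is_spiked_cycle_def)
  let ?n = "L + card I"
  have k: "2 \<le> card I" "?n mod 3 = 2" and L_mod3: "L mod 3 \<noteq> 1"
    using very_good_spikes_facts[OF vg finite_I spikes_below] vg by (auto simp: very_good_spikes_def)
  show ?thesis
  proof (rule extremalI[where d = "(2 * ?n - 1) div 3"])
    fix D assume "dissociation_set V E D"
    hence "3 * card D + 1 \<le> 2 * ?n" by (rule very_good_card_le[OF vg])
    thus "card D \<le> (2 * ?n - 1) div 3" by (rule div3_bounds_2mod3(1)[OF k(2)])
  next
    fix u assume "u \<in> V"
    thus "\<exists>D. dissociation_set V E D \<and> u \<notin> D \<and> (2 * ?n - 1) div 3 \<le> card D"
      using ex_dissociation_set_avoiding_vertex[OF k(1)] div3_bounds_2mod3(2)[OF k(2)] by blast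
  next
    show "3 * ((2 * ?n - 1) div 3) + card E + 1 + cycles_1mod3 V E = 3 * card V"
      using div3_bounds_2mod3(3)[OF k(2)] card_V card_E cycles_1mod3 L_mod3 by simp
  qed (use finite_V V_eq L_pos simple_graph connected in auto)
qed

lemma extremal_if_inC: "inC V E \<Longrightarrow> extremal V E"
proof (induction rule: inC.induct)
  case (base_P3 a b c) then show ?case by (rule extremal_P3)
next
  case (base_cycle V E) then show ?case by (rule extremal_good_cycle)
next
  case (base_spiked V E) then show ?case by (rule extremal_very_good_spiked_cycle)
next
  case (op1 V E u v w x)
  have "extremal (V \<union> {u, v, w}) (E \<union> {{u, v}, {v, w}} \<union> {{x, w}})"
    using op1 by (intro extremal_bridge extremal_P3) auto
  moreover have "E \<union> {{u, v}, {v, w}} \<union> {{x, w}} = E \<union> {{u, v}, {v, w}, {w, x}}"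
    by (auto simp: insert_commute)
  ultimately show ?case by simp
next
  case (op2 V E v u u' x)
  have "extremal (V \<union> {u, v, u'}) (E \<union> {{u, v}, {v, u'}} \<union> {{x, v}})"
    using op2 by (intro extremal_bridge extremal_P3) auto
  moreover have "E \<union> {{u, v}, {v, u'}} \<union> {{x, v}} = E \<union> {{v, u}, {v, u'}, {v, x}}"
    by (auto simp: insert_commute)
  moreover have "V \<union> {u, v, u'} = V \<union> {v, u, u'}" by auto
  ultimately show ?case by simp
next
  case (op3 V E H EH y x)
  thus ?case using extremal_good_cycle[of H EH] by (intro extremal_bridge) auto
next
  case (op4 V E H EH y x)
  thus ?case using extremal_very_good_spiked_cycle[of H EH] by (intro extremal_bridge) auto
qed

theorem lemma1:
  fixes V :: "'a set" and E :: "'a set set"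
  assumes "inC V E"
  shows "real (diss V E) =
           real (card V) - (real (card E) + real (card (components V E))
             + real (card {S \<in> induced_cycle_sets V E. card S mod 3 = 1})) / 3
         \<and> (\<forall>u\<in>V. \<exists>D. max_dissociation_set V E D \<and> u \<notin> D)"
proof -
  have ext: "extremal V E" using extremal_if_inC[OF assms] .
  hence "components V E = {V}" using components_connected by (auto simp: extremal_def)
  moreover have "3 * diss V E + card E + 1 + cycles_1mod3 V E = 3 * card V" "avoidable V E"
    using ext by (auto simp: extremal_def)
  ultimately show ?thesis by (auto simp: cycles_1mod3_def avoidable_def field_simps)
qed

end
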